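(* Consider the system \[ \begin{aligned} \dot S_h(t)&=\beta_h-C_{vh}\frac{I_v(t)}{N_v(t)}S_h(t)-\mu_hS_h(t),\\ \dot I_h(t)&=C_{vh}\frac{I_v(t-\tau)}{N_v(t-\tau)}S_h(t-\tau)-\mu_hI_h(t),\\ \dot S_v(t)&=\beta_v-C_{hv}I_h(t)S_v(t)-\mu_vS_v(t),\\ \dot I_v(t)&=C_{hv}I_h(t)S_v(t)-\mu_vI_v(t), \end{aligned} \] with $N_v=S_v+I_v$ and positive parameters $\beta_h,\beta_v,\mu_h,\mu_v,C_{vh},C_{hv}$. Let $E^0=(\beta_h/\mu_h,0,\beta_v/\mu_v,0)^T$ be its disease-free equilibrium and $R_0=\sqrt{C_{vh}C_{hv}\beta_h/(\mu_h^2\mu_v)}$. Then for any $\tau\ge0$, $E^0$ is locally asymptotically stable if $R_0<1$ and unstable if $R_0>1$.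
   Context: The phase space is $C_+=\{\varphi\in C([-\tau,0],\mathbb{R}_+^4):\varphi_3(\theta)+\varphi_4(\theta)>0\ \forall\theta\in[-\tau,0]\}$ with the sup-norm. *)

theory Defs
  imports "HOL-Analysis.Analysis"
begin

text \<open>A solution of the delay system on [-tau, infinity) is given by four component functions.
  Its restriction to [-tau,0] is the initial history phi; the solution must be continuous
  on [-tau, infinity), keep N_v = S_v + I_v positive (so the right-hand side is defined), and
  satisfy the equations for t \<ge> 0 (right derivative at t = 0).\<close>

definition dde_solution ::
  "real \<Rightarrow> real \<Rightarrow> real \<Rightarrow> real \<Rightarrow> real \<Rightarrow> real \<Rightarrow> real \<Rightarrow>
   (real \<Rightarrow> real) \<Rightarrow> (real \<Rightarrow> real) \<Rightarrow> (real \<Rightarrow> real) \<Rightarrow> (real \<Rightarrow> real) \<Rightarrow> bool" where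
  "dde_solution bh bv mh mv cvh chv tau Sh Ih Sv Iv \<longleftrightarrow>
     continuous_on {-tau..} Sh \<and> continuous_on {-tau..} Ih \<and>
     continuous_on {-tau..} Sv \<and> continuous_on {-tau..} Iv \<and>
     (\<forall>t \<ge> -tau. Sv t + Iv t > 0) \<and>
     (\<forall>t \<ge> 0.
        (Sh has_real_derivative
           (bh - cvh * (Iv t / (Sv t + Iv t)) * Sh t - mh * Sh t)) (at t within {0..}) \<and>
        (Ih has_real_derivative
           (cvh * (Iv (t - tau) / (Sv (t - tau) + Iv (t - tau))) * Sh (t - tau) - mh * Ih t))
           (at t within {0..}) \<and>
        (Sv has_real_derivative (bv - chv * Ih t * Sv t - mv * Sv t)) (at t within {0..}) \<and>
        (Iv has_real_derivative (chv * Ih t * Sv t - mv * Iv t)) (at t within {0..}))"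

definition history_in_Cplus ::
  "real \<Rightarrow> (real \<Rightarrow> real) \<Rightarrow> (real \<Rightarrow> real) \<Rightarrow> (real \<Rightarrow> real) \<Rightarrow> (real \<Rightarrow> real) \<Rightarrow> bool" where
  "history_in_Cplus tau Sh Ih Sv Iv \<longleftrightarrow>
     (\<forall>\<theta>\<in>{-tau..0}. Sh \<theta> \<ge> 0 \<and> Ih \<theta> \<ge> 0 \<and> Sv \<theta> \<ge> 0 \<and> Iv \<theta> \<ge> 0 \<and> Sv \<theta> + Iv \<theta> > 0)"

definition dev ::
  "real \<Rightarrow> real \<Rightarrow> real \<Rightarrow> real \<Rightarrow>
   (real \<Rightarrow> real) \<Rightarrow> (real \<Rightarrow> real) \<Rightarrow> (real \<Rightarrow> real) \<Rightarrow> (real \<Rightarrow> real) \<Rightarrow> real \<Rightarrow> real" where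
  "dev bh bv mh mv Sh Ih Sv Iv t =
     max (max \<bar>Sh t - bh / mh\<bar> \<bar>Ih t\<bar>) (max \<bar>Sv t - bv / mv\<bar> \<bar>Iv t\<bar>)"

definition E0_stable ::
  "real \<Rightarrow> real \<Rightarrow> real \<Rightarrow> real \<Rightarrow> real \<Rightarrow> real \<Rightarrow> real \<Rightarrow> bool" where
  "E0_stable bh bv mh mv cvh chv tau \<longleftrightarrow>
     (\<forall>\<epsilon>>0. \<exists>\<delta>>0. \<forall>Sh Ih Sv Iv.
        dde_solution bh bv mh mv cvh chv tau Sh Ih Sv Iv \<and> history_in_Cplus tau Sh Ih Sv Iv \<and>
        (\<forall>\<theta>\<in>{-tau..0}. dev bh bv mh mv Sh Ih Sv Iv \<theta> < \<delta>)
        \<longrightarrow> (\<forall>t\<ge>0. dev bh bv mh mv Sh Ih Sv Iv t < \<epsilon>))"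

definition E0_attractive ::
  "real \<Rightarrow> real \<Rightarrow> real \<Rightarrow> real \<Rightarrow> real \<Rightarrow> real \<Rightarrow> real \<Rightarrow> bool" where
  "E0_attractive bh bv mh mv cvh chv tau \<longleftrightarrow>
     (\<exists>\<delta>>0. \<forall>Sh Ih Sv Iv.
        dde_solution bh bv mh mv cvh chv tau Sh Ih Sv Iv \<and> history_in_Cplus tau Sh Ih Sv Iv \<and>
        (\<forall>\<theta>\<in>{-tau..0}. dev bh bv mh mv Sh Ih Sv Iv \<theta> < \<delta>)
        \<longrightarrow> ((\<lambda>t. dev bh bv mh mv Sh Ih Sv Iv t) \<longlongrightarrow> 0) at_top)"

definition E0_LAS ::
  "real \<Rightarrow> real \<Rightarrow> real \<Rightarrow> real \<Rightarrow> real \<Rightarrow> real \<Rightarrow> real \<Rightarrow> bool" where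
  "E0_LAS bh bv mh mv cvh chv tau \<longleftrightarrow>
     E0_stable bh bv mh mv cvh chv tau \<and> E0_attractive bh bv mh mv cvh chv tau"

end

theory Submission
  imports Defs
begin

(* Weight the vector deviations by a constant c. The bounds chv*bv/mv^2 and mh^2*bv/(cvh*bh*mv)
   have ratio R0^2, so for R0 < 1 a weight c strictly between them exists. For small M and a, a
   solution then cannot leave the box |Sh - bh/mh|, |Ih| <= M exp(-a t), |Sv - bv/mv|, |Iv| <= c M exp(-a t):
   at the first time a face is touched, the decay term -m u of that component beats the incidence
   term feeding it. This yields exponential decay, i.e. local asymptotic stability.
   For R0 > 1 a weight on the other side makes Ih >= z exp(s t), Iv >= c z exp(s t) invariant for
   solutions staying near E0, so histories arbitrarily close to E0 produce solutions that leave a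
   fixed neighbourhood. Such solutions exist: Picard iteration solves a truncated, globally Lipschitz
   version of the system, whose truncations are inactive because it keeps a box invariant. *)

section \<open>Picard iteration for delay equations\<close>

lemma at_within_atLeastAtMost_eq_atLeast:
  fixes a b t :: real
  assumes "a \<le> t" "t < b"
  shows "at t within {a..b} = at t within {a..}"
  by (rule at_within_nhd[of t "{..<b}"]) (use assms in auto)

lemma continuous_on_atLeast_if_atLeastAtMost:
  fixes f :: "real \<Rightarrow> 'a::topological_space"
  assumes "\<And>T. continuous_on {a..T} f"
  shows "continuous_on {a..} f"
proof (subst continuous_on_eq_continuous_within, intro ballI)
  fix t assume t: "t \<in> {a..}"
  have "continuous (at t within {a..t+1}) f"
    using assms[of "t+1"] t by (simp add: continuous_on_eq_continuous_within)
  then show "continuous (at t within {a..}) f"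
    using at_within_atLeastAtMost_eq_atLeast[of a t "t+1"] t by simp
qed

lemma integral_has_vector_derivative_atLeast:
  fixes g :: "real \<Rightarrow> 'a::banach"
  assumes "continuous_on {a..} g" "a \<le> t"
  shows "((\<lambda>u. integral {a..u} g) has_vector_derivative g t) (at t within {a..})"
proof -
  have "continuous_on {a..t+1} g" using assms(1) by (rule continuous_on_subset) auto
  from integral_has_vector_derivative[OF this, of t] assms(2)
  show ?thesis using at_within_atLeastAtMost_eq_atLeast[of a t "t+1"] by simp
qed

lemma continuous_on_integral_atLeast:
  fixes g :: "real \<Rightarrow> 'a::banach"
  assumes "continuous_on {a..} g"
  shows "continuous_on {a..} (\<lambda>u. integral {a..u} g)"
  unfolding continuous_on_eq_continuous_within
  using integral_has_vector_derivative_atLeast[OF assms] has_vector_derivative_continuous by blast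

lemma integral_power_over_fact:
  fixes c K s :: real
  assumes "0 \<le> s"
  shows "integral {0..s} (\<lambda>r. c * K * (c * r) ^ n / fact n) = K * (c * s) ^ Suc n / fact (Suc n)"
proof -
  have "((\<lambda>r. c * K * (c * r) ^ n / fact n) has_integral
          K * (c * s) ^ Suc n / fact (Suc n) - K * (c * 0) ^ Suc n / fact (Suc n)) {0..s}"
  proof (rule fundamental_theorem_of_calculus[OF assms])
    fix x assume "x \<in> {0..s}"
    have "((\<lambda>r. K * (c * r) ^ Suc n / fact (Suc n)) has_real_derivative
           K * (real (Suc n) * (c * x) ^ n * c) / fact (Suc n)) (at x within {0..s})"
      by (auto intro!: derivative_eq_intros simp del: power_Suc)
    also have "K * (real (Suc n) * (c * x) ^ n * c) / fact (Suc n) = c * K * (c * x) ^ n / fact n"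
      by (simp add: fact_Suc field_simps del: of_nat_Suc)
    finally show "((\<lambda>r. K * (c * r) ^ Suc n / fact (Suc n)) has_vector_derivative
           c * K * (c * x) ^ n / fact n) (at x within {0..s})"
      by (simp add: has_real_derivative_iff_has_vector_derivative)
  qed
  then have "((\<lambda>r. c * K * (c * r) ^ n / fact n) has_integral K * (c * s) ^ Suc n / fact (Suc n)) {0..s}"
    by simp
  then show ?thesis by (rule integral_unique)
qed

lemma lipschitz_on_fst [lipschitz_intros]:
  "C-lipschitz_on U f \<Longrightarrow> C-lipschitz_on U (\<lambda>x. fst (f x))"
  by (auto simp: lipschitz_on_def intro: order_trans[OF dist_fst_le])

lemma lipschitz_on_snd [lipschitz_intros]:
  "C-lipschitz_on U f \<Longrightarrow> C-lipschitz_on U (\<lambda>x. snd (f x))"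
  by (auto simp: lipschitz_on_def intro: order_trans[OF dist_snd_le])

lemma lipschitz_on_clamp [lipschitz_intros]:
  fixes f :: "'a::metric_space \<Rightarrow> 'b::euclidean_space"
  shows "C-lipschitz_on U f \<Longrightarrow> C-lipschitz_on U (\<lambda>x. clamp a b (f x))"
  by (auto simp: lipschitz_on_def intro: order_trans[OF dist_clamps_le_dist_args])

lemma lipschitz_on_mult_bounded:
  fixes f g :: "'a::metric_space \<Rightarrow> real"
  assumes "C-lipschitz_on U f" "D-lipschitz_on U g"
    and "\<And>x. x \<in> U \<Longrightarrow> \<bar>f x\<bar> \<le> A" "\<And>x. x \<in> U \<Longrightarrow> \<bar>g x\<bar> \<le> B" "0 \<le> A" "0 \<le> B"
  shows "(A * D + B * C)-lipschitz_on U (\<lambda>x. f x * g x)"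
proof (rule lipschitz_onI)
  fix x y assume "x \<in> U" "y \<in> U"
  have "f x * g x - f y * g y = f x * (g x - g y) + g y * (f x - f y)" by (simp add: algebra_simps)
  then have "dist (f x * g x) (f y * g y) \<le> \<bar>f x\<bar> * dist (g x) (g y) + \<bar>g y\<bar> * dist (f x) (f y)"
    by (simp add: dist_real_def abs_mult[symmetric] abs_triangle_ineq)
  also have "\<dots> \<le> A * (D * dist x y) + B * (C * dist x y)"
    using assms \<open>x \<in> U\<close> \<open>y \<in> U\<close>
    by (intro add_mono mult_mono lipschitz_onD[OF assms(1)] lipschitz_onD[OF assms(2)])
      (auto intro: order_trans[OF abs_ge_zero] lipschitz_on_nonneg)
  finally show "dist (f x * g x) (f y * g y) \<le> (A * D + B * C) * dist x y"
    by (simp add: algebra_simps)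
next
  show "0 \<le> A * D + B * C"
    using assms(5,6) lipschitz_on_nonneg[OF assms(1)] lipschitz_on_nonneg[OF assms(2)] by simp
qed

lemma clamp_real_bounds: "0 \<le> b \<Longrightarrow> 0 \<le> clamp 0 b (x::real) \<and> clamp 0 b x \<le> b"
  using clamp_in_interval[of 0 b x] by (simp add: interval_cbox[symmetric])

lemma lipschitz_on_mult_clamp [lipschitz_intros]:
  fixes f g :: "'a::metric_space \<Rightarrow> real"
  assumes "C-lipschitz_on U f" "D-lipschitz_on U g" "0 \<le> a" "0 \<le> b"
  shows "(a * D + b * C)-lipschitz_on U (\<lambda>x. clamp 0 a (f x) * clamp 0 b (g x))"
  using clamp_real_bounds assms
  by (intro lipschitz_on_mult_bounded lipschitz_on_clamp) (auto simp: abs_of_nonneg)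

lemma has_vector_derivative_fst:
  "(x has_vector_derivative v) F \<Longrightarrow> ((\<lambda>t. fst (x t)) has_vector_derivative fst v) F"
  unfolding has_vector_derivative_def by (drule has_derivative_fst) simp

lemma has_vector_derivative_snd:
  "(x has_vector_derivative v) F \<Longrightarrow> ((\<lambda>t. snd (x t)) has_vector_derivative snd v) F"
  unfolding has_vector_derivative_def by (drule has_derivative_snd) simp

locale lipschitz_delay_ivp =
  fixes F :: "'a::banach \<Rightarrow> 'a \<Rightarrow> 'a" and L tau :: real and phi :: "real \<Rightarrow> 'a"
  assumes lipschitz: "L-lipschitz_on UNIV (\<lambda>(x, y). F x y)"
    and tau_nonneg: "0 \<le> tau"
    and phi_continuous: "continuous_on {-tau..0} phi"
begin

lemma L_nonneg: "0 \<le> L"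
  using lipschitz by (rule lipschitz_on_nonneg)

lemma norm_F_diff_le: "norm (F x y - F x' y') \<le> L * (norm (x - x') + norm (y - y'))"
proof -
  have "norm (F x y - F x' y') \<le> L * norm ((x, y) - (x', y'))"
    using lipschitz_on_normD[OF lipschitz] by force
  also have "\<dots> \<le> L * (norm (x - x') + norm (y - y'))"
    using norm_Pair_le[of "x - x'" "y - y'"] L_nonneg by (intro mult_left_mono) auto
  finally show ?thesis .
qed

definition field_along :: "(real \<Rightarrow> 'a) \<Rightarrow> real \<Rightarrow> 'a" where
  "field_along x s = F (x s) (x (s - tau))"

definition picard :: "(real \<Rightarrow> 'a) \<Rightarrow> real \<Rightarrow> 'a" where
  "picard x t = (if t \<le> 0 then phi t else phi 0 + integral {0..t} (field_along x))"

definition picard_iterate :: "nat \<Rightarrow> real \<Rightarrow> 'a" where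
  "picard_iterate n = (picard ^^ n) (\<lambda>t. if t \<le> 0 then phi t else phi 0)"

definition picard_limit :: "real \<Rightarrow> 'a" where
  "picard_limit s = picard_iterate 0 s + (\<Sum>i. picard_iterate (Suc i) s - picard_iterate i s)"

lemma continuous_on_field_along:
  assumes "continuous_on {-tau..} x"
  shows "continuous_on {0..} (field_along x)"
proof -
  have state: "continuous_on {0..} (\<lambda>s. (x s, x (s - tau)))"
    using tau_nonneg
    by (intro continuous_intros continuous_on_subset[OF assms]
        continuous_on_compose2[OF assms]) auto
  have "continuous_on UNIV (\<lambda>p. F (fst p) (snd p))"
    using lipschitz_on_continuous_on[OF lipschitz] by (simp add: case_prod_unfold)
  from continuous_on_compose2[OF this state] show ?thesis
    by (simp add: field_along_def)
qed

lemma picard_history: "t \<le> 0 \<Longrightarrow> picard x t = phi t"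
  by (simp add: picard_def)

lemma picard_has_vector_derivative:
  assumes "continuous_on {-tau..} x" "0 \<le> t"
  shows "(picard x has_vector_derivative field_along x t) (at t within {0..})"
proof -
  have "((\<lambda>u. phi 0 + integral {0..u} (field_along x)) has_vector_derivative field_along x t)
          (at t within {0..})"
    using has_vector_derivative_add[OF has_vector_derivative_const
        integral_has_vector_derivative_atLeast[OF continuous_on_field_along[OF assms(1)] assms(2)]]
    by simp
  then show ?thesis
    by (rule has_vector_derivative_transform[rotated 2]) (use assms in \<open>auto simp: picard_def\<close>)
qed

lemma continuous_on_picard:
  assumes "continuous_on {-tau..} x"
  shows "continuous_on {-tau..} (picard x)"
proof -
  have "continuous_on ({-tau..0} \<union> {0..})
          (\<lambda>t. if t \<le> 0 then phi t else phi 0 + integral {0..t} (field_along x))"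
    using phi_continuous continuous_on_integral_atLeast[OF continuous_on_field_along[OF assms]]
    by (intro continuous_on_cases) (auto intro!: continuous_intros)
  moreover have "{-tau..0} \<union> {0..} = {-tau..}" using tau_nonneg by auto
  ultimately show ?thesis by (simp add: picard_def[abs_def])
qed

lemma norm_picard_diff_le:
  fixes g :: "real \<Rightarrow> real"
  assumes "continuous_on {-tau..} x" "continuous_on {-tau..} y" "0 \<le> t" "continuous_on {0..t} g"
    and "\<And>s. s \<in> {0..t} \<Longrightarrow> norm (field_along x s - field_along y s) \<le> g s"
  shows "norm (picard x t - picard y t) \<le> integral {0..t} g"
proof (cases "t = 0")
  case False
  have integrable: "field_along z integrable_on {0..t}" if "continuous_on {-tau..} z" for z
    by (rule integrable_continuous_interval,
        rule continuous_on_subset[OF continuous_on_field_along[OF that]]) auto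
  have "picard x t - picard y t = integral {0..t} (\<lambda>s. field_along x s - field_along y s)"
    using False assms(1-3) integrable by (simp add: picard_def integral_diff)
  also have "norm \<dots> \<le> integral {0..t} g"
    using assms by (intro integral_norm_bound_integral integrable_diff integrable
        integrable_continuous_interval[where a=0 and b=t]) auto
  finally show ?thesis .
qed (simp add: picard_def)

lemma picard_iterate_Suc: "picard_iterate (Suc n) = picard (picard_iterate n)"
  by (simp add: picard_iterate_def)

lemma picard_iterate_history: "t \<le> 0 \<Longrightarrow> picard_iterate n t = phi t"
  by (cases n) (simp_all add: picard_iterate_Suc picard_history picard_iterate_def)

lemma continuous_on_picard_iterate: "continuous_on {-tau..} (picard_iterate n)"
proof (induction n)
  case 0
  have "continuous_on ({-tau..0} \<union> {0..}) (\<lambda>t. if t \<le> 0 then phi t else phi 0)"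
    using phi_continuous by (intro continuous_on_cases) (auto intro!: continuous_intros)
  moreover have "{-tau..0} \<union> {0..} = {-tau..}" using tau_nonneg by auto
  ultimately show ?case by (simp add: picard_iterate_def)
qed (simp add: picard_iterate_Suc continuous_on_picard)

lemma picard_iterate_diff_le:
  assumes first: "\<forall>s\<in>{-tau..T}. norm (picard_iterate 1 s - picard_iterate 0 s) \<le> K"
  shows "s \<in> {-tau..T} \<Longrightarrow>
    norm (picard_iterate (Suc n) s - picard_iterate n s) \<le> K * (2 * L * max s 0) ^ n / fact n"
proof (induction n arbitrary: s)
  case 0
  then show ?case using first by simp
next
  case (Suc n)
  show ?case
  proof (cases "s \<le> 0")
    case True
    then show ?thesis by (simp add: picard_iterate_history)
  next
    case False
    have "0 \<le> K" using first Suc.prems norm_ge_zero order_trans by blast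
    have "norm (picard (picard_iterate (Suc n)) s - picard (picard_iterate n) s)
            \<le> integral {0..s} (\<lambda>r. (2 * L) * K * ((2 * L) * r) ^ n / fact n)"
    proof (rule norm_picard_diff_le[OF continuous_on_picard_iterate continuous_on_picard_iterate])
      fix r assume r: "r \<in> {0..s}"
      have "r \<in> {-tau..T}" "r - tau \<in> {-tau..T}" using r Suc.prems tau_nonneg by auto
      have "norm (field_along (picard_iterate (Suc n)) r - field_along (picard_iterate n) r)
          \<le> L * (norm (picard_iterate (Suc n) r - picard_iterate n r)
                 + norm (picard_iterate (Suc n) (r - tau) - picard_iterate n (r - tau)))"
        unfolding field_along_def by (rule norm_F_diff_le)
      also have "\<dots> \<le> L * (K * (2 * L * max r 0) ^ n / fact n + K * (2 * L * max (r - tau) 0) ^ n / fact n)"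
        using Suc.IH[OF \<open>r \<in> {-tau..T}\<close>] Suc.IH[OF \<open>r - tau \<in> {-tau..T}\<close>] L_nonneg
        by (intro mult_left_mono add_mono) auto
      also have "\<dots> \<le> L * (K * (2 * L * r) ^ n / fact n + K * (2 * L * r) ^ n / fact n)"
        using r L_nonneg \<open>0 \<le> K\<close> tau_nonneg
        by (intro mult_left_mono add_mono divide_right_mono power_mono) auto
      finally show "norm (field_along (picard_iterate (Suc n)) r - field_along (picard_iterate n) r)
          \<le> (2 * L) * K * ((2 * L) * r) ^ n / fact n"
        by (simp add: field_simps)
    qed (use False in \<open>auto intro!: continuous_intros\<close>)
    also have "\<dots> = K * (2 * L * s) ^ Suc n / fact (Suc n)"
      using False by (intro integral_power_over_fact) auto
    finally show ?thesis using False by (simp add: picard_iterate_Suc)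
  qed
qed

lemma uniform_limit_picard_iterate:
  "uniform_limit {-tau..T} picard_iterate picard_limit sequentially"
proof -
  have "bounded ((\<lambda>s. picard_iterate 1 s - picard_iterate 0 s) ` {-tau..T})"
    by (intro compact_imp_bounded compact_continuous_image continuous_intros)
      (auto intro: continuous_on_subset[OF continuous_on_picard_iterate])
  then obtain K where "0 < K" and first: "\<forall>s\<in>{-tau..T}. norm (picard_iterate 1 s - picard_iterate 0 s) \<le> K"
    unfolding bounded_pos by blast
  note K = less_imp_le[OF \<open>0 < K\<close>] picard_iterate_diff_le[OF first]
  have "summable (\<lambda>n. K * ((2 * L * max T 0) ^ n /\<^sub>R fact n))"
    using exp_converges sums_summable by (blast intro: summable_mult)
  then have summable: "summable (\<lambda>n. K * (2 * L * max T 0) ^ n / fact n)"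
    by (simp add: divide_inverse mult.commute mult.left_commute)
  have "uniform_limit {-tau..T} (\<lambda>n s. \<Sum>i<n. picard_iterate (Suc i) s - picard_iterate i s)
          (\<lambda>s. \<Sum>i. picard_iterate (Suc i) s - picard_iterate i s) sequentially"
  proof (rule Weierstrass_m_test[OF _ summable])
    fix n s assume s: "s \<in> {-tau..T}"
    have "K * (2 * L * max s 0) ^ n / fact n \<le> K * (2 * L * max T 0) ^ n / fact n"
      using K L_nonneg s by (intro divide_right_mono mult_left_mono power_mono) auto
    then show "norm (picard_iterate (Suc n) s - picard_iterate n s) \<le> K * (2 * L * max T 0) ^ n / fact n"
      by (rule order_trans[OF K(2)[OF s]])
  qed
  then have "uniform_limit {-tau..T}
      (\<lambda>n s. picard_iterate 0 s + (\<Sum>i<n. picard_iterate (Suc i) s - picard_iterate i s))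
      picard_limit sequentially"
    unfolding picard_limit_def[abs_def] by (intro uniform_limit_add uniform_limit_const)
  moreover have "picard_iterate 0 s + (\<Sum>i<n. picard_iterate (Suc i) s - picard_iterate i s)
      = picard_iterate n s" for n s
    using sum_lessThan_telescope[of "\<lambda>i. picard_iterate i s" n] by simp
  ultimately show ?thesis by simp
qed

lemma continuous_on_picard_limit: "continuous_on {-tau..} picard_limit"
proof (rule continuous_on_atLeast_if_atLeastAtMost)
  fix T
  have "continuous_on {-tau..T} (picard_iterate n)" for n
    by (rule continuous_on_subset[OF continuous_on_picard_iterate]) auto
  then show "continuous_on {-tau..T} picard_limit"
    by (intro uniform_limit_theorem[OF _ uniform_limit_picard_iterate] always_eventually) auto
qed

lemma picard_iterate_tendsto: "-tau \<le> s \<Longrightarrow> (\<lambda>n. picard_iterate n s) \<longlonglongrightarrow> picard_limit s"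
  using tendsto_uniform_limitI[OF uniform_limit_picard_iterate[of s]] by auto

lemma picard_limit_history: "t \<in> {-tau..0} \<Longrightarrow> picard_limit t = phi t"
  using picard_iterate_tendsto[of t] by (simp add: picard_iterate_history LIMSEQ_const_iff)

lemma picard_limit_fixed_point:
  assumes "0 \<le> t"
  shows "picard picard_limit t = picard_limit t"
proof -
  have "(\<lambda>n. picard (picard_iterate n) t) \<longlonglongrightarrow> picard picard_limit t"
  proof (rule tendstoI)
    fix e :: real assume "e > 0"
    define e' where "e' = e / (2 * (L + 1) * (t + 1))"
    have "e' > 0" using \<open>e > 0\<close> L_nonneg assms by (simp add: e'_def)
    then have "\<forall>\<^sub>F n in sequentially. \<forall>s\<in>{-tau..t}. dist (picard_iterate n s) (picard_limit s) < e'"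
      using uniform_limit_picard_iterate[of t] unfolding uniform_limit_iff by blast
    then show "\<forall>\<^sub>F n in sequentially. dist (picard (picard_iterate n) t) (picard picard_limit t) < e"
    proof eventually_elim
      case (elim n)
      have "norm (picard (picard_iterate n) t - picard picard_limit t) \<le> integral {0..t} (\<lambda>r. 2 * (L + 1) * e')"
      proof (rule norm_picard_diff_le[OF continuous_on_picard_iterate continuous_on_picard_limit assms])
        fix r assume r: "r \<in> {0..t}"
        then have "r \<in> {-tau..t}" "r - tau \<in> {-tau..t}" using tau_nonneg by auto
        then have "norm (picard_iterate n r - picard_limit r) < e'"
          "norm (picard_iterate n (r - tau) - picard_limit (r - tau)) < e'"
          using elim by (auto simp: dist_norm)
        then have "norm (picard_iterate n r - picard_limit r)
            + norm (picard_iterate n (r - tau) - picard_limit (r - tau)) \<le> 2 * e'"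
          by simp
        have "norm (field_along (picard_iterate n) r - field_along picard_limit r)
            \<le> L * (norm (picard_iterate n r - picard_limit r)
                   + norm (picard_iterate n (r - tau) - picard_limit (r - tau)))"
          unfolding field_along_def by (rule norm_F_diff_le)
        also have "\<dots> \<le> (L + 1) * (2 * e')"
          using \<open>_ \<le> 2 * e'\<close> L_nonneg \<open>e' > 0\<close> by (intro mult_mono) auto
        finally show "norm (field_along (picard_iterate n) r - field_along picard_limit r) \<le> 2 * (L + 1) * e'"
          by (simp add: mult_ac)
      qed simp
      also have "\<dots> = e * (t / (t + 1))"
        using L_nonneg assms by (simp add: e'_def)
      also have "\<dots> < e" using \<open>e > 0\<close> assms by (simp add: field_simps)
      finally show ?case by (simp add: dist_norm)
    qed
  qed
  moreover have "(\<lambda>n. picard (picard_iterate n) t) \<longlonglongrightarrow> picard_limit t"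
    using LIMSEQ_Suc[OF picard_iterate_tendsto[of t]] assms tau_nonneg by (simp add: picard_iterate_Suc)
  ultimately show ?thesis by (rule LIMSEQ_unique)
qed

theorem solution_exists:
  "\<exists>x. continuous_on {-tau..} x \<and> (\<forall>t\<in>{-tau..0}. x t = phi t) \<and>
       (\<forall>t\<ge>0. (x has_vector_derivative F (x t) (x (t - tau))) (at t within {0..}))"
proof (intro exI conjI allI impI ballI)
  show "continuous_on {-tau..} picard_limit" by (rule continuous_on_picard_limit)
  show "picard_limit t = phi t" if "t \<in> {-tau..0}" for t using picard_limit_history that .
  fix t :: real assume "0 \<le> t"
  have "(picard picard_limit has_vector_derivative field_along picard_limit t) (at t within {0..})"
    by (rule picard_has_vector_derivative[OF continuous_on_picard_limit \<open>0 \<le> t\<close>])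
  then have "(picard_limit has_vector_derivative field_along picard_limit t) (at t within {0..})"
    by (rule has_vector_derivative_transform[rotated 2]) (use \<open>0 \<le> t\<close> in \<open>auto simp: picard_limit_fixed_point\<close>)
  then show "(picard_limit has_vector_derivative F (picard_limit t) (picard_limit (t - tau))) (at t within {0..})"
    by (simp add: field_along_def)
qed

end


section \<open>First-touch arguments\<close>

lemma first_touch_deriv_le:
  fixes u v :: "real \<Rightarrow> real"
  assumes du: "(u has_real_derivative Du) (at T within {0..})"
    and dv: "(v has_real_derivative Dv) (at T within {0..})"
    and "0 < T" "u T = v T" and below: "\<And>s. 0 \<le> s \<Longrightarrow> s < T \<Longrightarrow> u s \<le> v s"
  shows "Dv \<le> Du"
proof (rule ccontr)
  assume "\<not> Dv \<le> Du"
  then have "((\<lambda>s. u s - v s) has_real_derivative Du - Dv) (at T within {0..})" "Du - Dv < 0"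
    by (auto intro: DERIV_diff du dv)
  then obtain d where "d > 0" and dec: "\<forall>h>0. T - h \<in> {0..} \<longrightarrow> h < d \<longrightarrow> u T - v T < u (T - h) - v (T - h)"
    by (blast dest: has_real_derivative_neg_dec_left)
  define h where "h = min d T / 2"
  have "0 < h" "0 \<le> T - h" "h < d" "T - h < T" using \<open>d > 0\<close> \<open>0 < T\<close> by (auto simp: h_def)
  then show False using dec below[of "T - h"] \<open>u T = v T\<close> by auto
qed

lemma first_touch_abs_deriv_le:
  fixes u B :: "real \<Rightarrow> real"
  assumes du: "(u has_real_derivative Du) (at T within {0..})"
    and dB: "(B has_real_derivative DB) (at T within {0..})"
    and "0 < T" "\<bar>u T\<bar> = B T" and below: "\<And>s. 0 \<le> s \<Longrightarrow> s < T \<Longrightarrow> \<bar>u s\<bar> \<le> B s"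
  shows "DB \<le> \<bar>Du + m * u T\<bar> - m * B T"
proof (cases "0 \<le> u T")
  case True
  then have "u T = B T" using assms(4) by simp
  have "DB \<le> Du"
    using first_touch_deriv_le[OF du dB \<open>0 < T\<close> \<open>u T = B T\<close>] below by force
  then show ?thesis using \<open>u T = B T\<close> abs_ge_self[of "Du + m * B T"] by simp
next
  case False
  then have "- u T = B T" using assms(4) by simp
  have "DB \<le> - Du"
    using first_touch_deriv_le[OF DERIV_minus[OF du] dB \<open>0 < T\<close> \<open>- u T = B T\<close>] below by force
  moreover have "u T = - B T" using \<open>- u T = B T\<close> by simp
  ultimately show ?thesis using abs_ge_minus_self[of "Du - m * B T"] by simp
qed

lemma exp_barrier_first_touch:
  fixes u :: "real \<Rightarrow> real"
  assumes "(u has_real_derivative Du) (at T within {0..})" "0 < T"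
    and "\<bar>u T\<bar> = w * exp (- a * T)" "\<And>s. 0 \<le> s \<Longrightarrow> s < T \<Longrightarrow> \<bar>u s\<bar> \<le> w * exp (- a * s)"
  shows "(m - a) * (w * exp (- a * T)) \<le> \<bar>Du + m * u T\<bar>"
proof -
  have "((\<lambda>t. w * exp (- a * t)) has_real_derivative - a * (w * exp (- a * T))) (at T within {0..})"
    by (auto intro!: derivative_eq_intros)
  from first_touch_abs_deriv_le[OF assms(1) this assms(2-4), of m] show ?thesis
    by (simp add: algebra_simps)
qed

lemma negative_if_no_first_zero:
  fixes h :: "real \<Rightarrow> real"
  assumes "a \<le> 0" and cont: "continuous_on {a..} h" and init: "\<forall>t\<in>{a..0}. h t < 0"
    and no_first_zero: "\<And>T. 0 < T \<Longrightarrow> h T = 0 \<Longrightarrow> \<forall>s\<in>{a..<T}. h s < 0 \<Longrightarrow> False"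
  shows "\<forall>t\<ge>a. h t < 0"
proof (rule ccontr)
  assume "\<not> ?thesis"
  then obtain t0 where "a \<le> t0" "0 \<le> h t0" by force
  define S where "S = {0..} \<inter> h -` {0..}"
  have "t0 \<in> S" using \<open>a \<le> t0\<close> \<open>0 \<le> h t0\<close> init by (force simp: S_def)
  have "closed S" unfolding S_def
    by (rule continuous_closed_preimage[OF continuous_on_subset[OF cont]]) (use \<open>a \<le> 0\<close> in auto)
  have bdd: "bdd_below S" by (rule bdd_belowI[of _ 0]) (auto simp: S_def)
  define T where "T = Inf S"
  have "T \<in> S" unfolding T_def using \<open>t0 \<in> S\<close> \<open>closed S\<close> bdd by (intro closed_contains_Inf) auto
  then have "0 \<le> T" "0 \<le> h T" by (auto simp: S_def)
  moreover have "h 0 < 0" using init \<open>a \<le> 0\<close> by auto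
  ultimately have "0 < T" by (cases "T = 0") auto
  have before: "\<forall>s\<in>{a..<T}. h s < 0"
  proof
    fix s assume s: "s \<in> {a..<T}"
    show "h s < 0"
    proof (rule ccontr)
      assume "\<not> h s < 0"
      then consider "s \<in> S" | "s < 0" by (force simp: S_def)
      then show False
      proof cases
        case 1
        then show False using s cInf_lower[OF _ bdd, of s] by (simp add: T_def)
      qed (use s init \<open>\<not> h s < 0\<close> in auto)
    qed
  qed
  have "h T = 0"
  proof (rule ccontr)
    assume "h T \<noteq> 0"
    with \<open>0 \<le> h T\<close> have "0 < h T" by simp
    obtain d where "0 < d" and d: "\<forall>s\<in>{a..}. dist s T < d \<longrightarrow> dist (h s) (h T) < h T"
      using cont \<open>0 < h T\<close> \<open>0 \<le> T\<close> \<open>a \<le> 0\<close> unfolding continuous_on_iff by (metis atLeast_iff order_trans)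
    define s where "s = T - min d T / 2"
    have "s \<in> {a..<T}" "dist s T < d" using \<open>0 < d\<close> \<open>0 < T\<close> \<open>a \<le> 0\<close> by (auto simp: s_def dist_real_def)
    then have "dist (h s) (h T) < h T" using d by auto
    then have "0 < h s" by (simp add: dist_real_def)
    then show False using before \<open>s \<in> {a..<T}\<close> by force
  qed
  then show False using no_first_zero[OF \<open>0 < T\<close> _ before] by simp
qed

section \<open>The vector-host model\<close>

lemma abs_host_incidence_less:
  fixes sh sv iv sstar nstar c rho K r k m :: real
  assumes "\<bar>sh - sstar\<bar> \<le> rho" "\<bar>sv - nstar\<bar> \<le> c * rho" "\<bar>iv\<bar> \<le> c * rho" "\<bar>iv\<bar> \<le> c * K * r"
    and "0 \<le> sstar" "0 \<le> k" "0 < r" "0 < nstar - 2 * c * rho"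
    and "k * c * K * (sstar + rho) < m * (nstar - 2 * c * rho)"
  shows "\<bar>k * (iv / (sv + iv)) * sh\<bar> < m * r"
proof -
  have N: "nstar - 2 * c * rho \<le> sv + iv" and "\<bar>sh\<bar> \<le> sstar + rho"
    using assms(1-3,5) by linarith+
  have "0 < sv + iv" using N assms(8) by linarith
  then have "\<bar>k * (iv / (sv + iv)) * sh\<bar> = k * (\<bar>iv\<bar> * \<bar>sh\<bar>) / (sv + iv)"
    using assms(6) by (simp add: abs_mult)
  also have "\<dots> \<le> k * ((c * K * r) * (sstar + rho)) / (sv + iv)"
    using \<open>0 < sv + iv\<close> \<open>\<bar>sh\<bar> \<le> sstar + rho\<close> assms(4,6)
    by (intro divide_right_mono mult_left_mono mult_mono) auto
  also have "\<dots> \<le> k * ((c * K * r) * (sstar + rho)) / (nstar - 2 * c * rho)"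
  proof (rule divide_left_mono[OF N])
    have "0 \<le> c * K * r" "0 \<le> sstar + rho" using assms(4) \<open>\<bar>sh\<bar> \<le> sstar + rho\<close> by linarith+
    then show "0 \<le> k * ((c * K * r) * (sstar + rho))" using assms(6) by (metis mult_nonneg_nonneg)
  qed (use \<open>0 < sv + iv\<close> assms(8) in \<open>rule mult_pos_pos\<close>)
  also have "\<dots> < m * r"
    using mult_strict_right_mono[OF assms(9) assms(7)] assms(8) by (simp add: divide_less_eq mult_ac)
  finally show ?thesis .
qed

lemma abs_vector_incidence_less:
  fixes ih sv nstar c rho r k m :: real
  assumes "\<bar>ih\<bar> \<le> r" "\<bar>sv - nstar\<bar> \<le> c * rho" "0 \<le> nstar" "0 \<le> k" "0 < r"
    and "k * (nstar + c * rho) < m * c"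
  shows "\<bar>k * ih * sv\<bar> < m * (c * r)"
proof -
  have "\<bar>sv\<bar> \<le> nstar + c * rho" using assms(2,3) by linarith
  then have "\<bar>k * ih * sv\<bar> \<le> k * (r * (nstar + c * rho))"
    using assms(1,4) unfolding abs_mult mult.assoc abs_of_nonneg[OF assms(4)]
    by (intro mult_left_mono mult_mono) auto
  also have "\<dots> < m * (c * r)"
    using mult_strict_right_mono[OF assms(6) assms(5)] by (simp add: mult_ac)
  finally show ?thesis .
qed

lemma incidence_lower_bound:
  fixes iv sv sh a b N :: real
  assumes "0 \<le> a" "a \<le> iv" "0 \<le> b" "b \<le> sh" "0 < sv + iv" "sv + iv \<le> N"
  shows "a * b / N \<le> iv / (sv + iv) * sh"
proof -
  have "a * b / N \<le> iv * sh / (sv + iv)"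
    using assms by (intro frac_le mult_mono mult_nonneg_nonneg) auto
  then show ?thesis by simp
qed

lemma less_mult_exp_div:
  fixes s z :: real
  assumes "0 < z" "0 \<le> s"
  shows "s < z * exp (s / z)"
proof -
  have "z * (1 + s / z) \<le> z * exp (s / z)"
    using \<open>0 < z\<close> by (intro mult_left_mono exp_ge_add_one_self) simp
  moreover have "z * (1 + s / z) = z + s" using \<open>0 < z\<close> by (simp add: field_simps)
  ultimately show ?thesis using \<open>0 < z\<close> by linarith
qed

lemma eventually_pos_at_right_0:
  fixes f :: "real \<Rightarrow> real"
  assumes "isCont f 0" "0 < f 0"
  shows "eventually (\<lambda>s. 0 < f s) (at_right 0)"
  using order_tendstoD(1)[OF tendsto_mono[OF at_le isContD[OF assms(1)]] assms(2)] by simp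

locale vector_host_model =
  fixes bh bv mh mv cvh chv tau :: real
  assumes bh_pos: "0 < bh" and bv_pos: "0 < bv" and mh_pos: "0 < mh" and mv_pos: "0 < mv"
    and cvh_pos: "0 < cvh" and chv_pos: "0 < chv" and delay_nonneg: "0 \<le> tau"
begin

abbreviation solution ::
  "(real \<Rightarrow> real) \<Rightarrow> (real \<Rightarrow> real) \<Rightarrow> (real \<Rightarrow> real) \<Rightarrow> (real \<Rightarrow> real) \<Rightarrow> bool" where
  "solution \<equiv> dde_solution bh bv mh mv cvh chv tau"

abbreviation deviation ::
  "(real \<Rightarrow> real) \<Rightarrow> (real \<Rightarrow> real) \<Rightarrow> (real \<Rightarrow> real) \<Rightarrow> (real \<Rightarrow> real) \<Rightarrow> real \<Rightarrow> real" where
  "deviation \<equiv> dev bh bv mh mv"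

lemma solution_derivatives:
  assumes "solution Sh Ih Sv Iv" "0 \<le> t"
  shows "(Sh has_real_derivative bh - cvh * (Iv t / (Sv t + Iv t)) * Sh t - mh * Sh t) (at t within {0..})"
    and "(Ih has_real_derivative cvh * (Iv (t - tau) / (Sv (t - tau) + Iv (t - tau))) * Sh (t - tau) - mh * Ih t)
           (at t within {0..})"
    and "(Sv has_real_derivative bv - chv * Ih t * Sv t - mv * Sv t) (at t within {0..})"
    and "(Iv has_real_derivative chv * Ih t * Sv t - mv * Iv t) (at t within {0..})"
  using assms unfolding dde_solution_def by auto

(* M exp(al tau) bounds the deviation over one delay interval. The conditions keep Sv + Iv away
   from 0 and let the decay of each component dominate its incidence term on the faces of the box
   of half-widths M exp(-al t) (host) and c M exp(-al t) (vector). *)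
definition admissible_decay :: "real \<Rightarrow> real \<Rightarrow> real \<Rightarrow> bool" where
  "admissible_decay M al c \<longleftrightarrow> 0 < M \<and> 0 \<le> al \<and> 0 < c \<and>
     0 < bv/mv - 2 * c * (M * exp (al * tau)) \<and>
     cvh * c * exp (al * tau) * (bh/mh + M * exp (al * tau)) < (mh - al) * (bv/mv - 2 * c * (M * exp (al * tau))) \<and>
     chv * (bv/mv + c * (M * exp (al * tau))) < (mv - al) * c"

lemma incidences_below_decay_barrier:
  assumes "admissible_decay M al c" "0 < T"
    and bound: "\<And>s. s \<in> {-tau..T} \<Longrightarrow> \<bar>Sh s - bh/mh\<bar> \<le> M * exp (- al * s) \<and> \<bar>Ih s\<bar> \<le> M * exp (- al * s) \<and>
        \<bar>Sv s - bv/mv\<bar> \<le> c * M * exp (- al * s) \<and> \<bar>Iv s\<bar> \<le> c * M * exp (- al * s)"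
  shows "s \<in> {T - tau, T} \<Longrightarrow> \<bar>cvh * (Iv s / (Sv s + Iv s)) * Sh s\<bar> < (mh - al) * (M * exp (- al * T))"
    and "\<bar>chv * Ih T * Sv T\<bar> < (mv - al) * (c * (M * exp (- al * T)))"
proof -
  have "0 < M" "0 \<le> al" "0 < c"
    and N_pos: "0 < bv/mv - 2 * c * (M * exp (al * tau))"
    and host: "cvh * c * exp (al * tau) * (bh/mh + M * exp (al * tau))
                 < (mh - al) * (bv/mv - 2 * c * (M * exp (al * tau)))"
    and vector: "chv * (bv/mv + c * (M * exp (al * tau))) < (mv - al) * c"
    using assms(1) by (simp_all add: admissible_decay_def)
  define K where "K = exp (al * tau)"
  define rho where "rho = M * K"
  define E where "E = M * exp (- al * T)"
  have "1 \<le> K" using \<open>0 \<le> al\<close> delay_nonneg by (simp add: K_def)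
  have "0 < E" using \<open>0 < M\<close> by (simp add: E_def)
  have below_rho: "M * exp (- al * s) \<le> rho" if "-tau \<le> s" for s
    using \<open>0 < M\<close> \<open>0 \<le> al\<close> that mult_left_mono[of "-s" tau al] by (simp add: rho_def K_def)
  have delayed: "M * exp (- al * (s - tau)) = K * (M * exp (- al * s))" for s
    by (simp add: K_def algebra_simps flip: exp_add)
  show "\<bar>cvh * (Iv s / (Sv s + Iv s)) * Sh s\<bar> < (mh - al) * (M * exp (- al * T))" if "s \<in> {T - tau, T}"
    unfolding E_def[symmetric]
  proof (rule abs_host_incidence_less[where sstar = "bh/mh" and nstar = "bv/mv" and rho = rho and K = K])
    have "-tau \<le> s" "s \<le> T" using that \<open>0 < T\<close> delay_nonneg by auto
    have "M * exp (- al * s) \<le> K * E"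
    proof (cases "s = T")
      case True
      then show ?thesis using \<open>1 \<le> K\<close> \<open>0 < E\<close> mult_right_mono[of 1 K E] by (simp add: E_def)
    next
      case False
      then have "s = T - tau" using that by simp
      then show ?thesis by (simp only: delayed E_def order_refl)
    qed
    then have "c * (M * exp (- al * s)) \<le> c * (K * E)"
      using \<open>0 < c\<close> by (intro mult_left_mono) auto
    moreover have "\<bar>Iv s\<bar> \<le> c * (M * exp (- al * s))"
      using bound[of s] \<open>-tau \<le> s\<close> \<open>s \<le> T\<close> by (simp add: mult.assoc)
    ultimately show "\<bar>Iv s\<bar> \<le> c * K * E" by (simp add: mult.assoc)
    show "\<bar>Sh s - bh/mh\<bar> \<le> rho" "\<bar>Sv s - bv/mv\<bar> \<le> c * rho" "\<bar>Iv s\<bar> \<le> c * rho"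
      using bound[of s] below_rho[of s] \<open>-tau \<le> s\<close> \<open>s \<le> T\<close> \<open>0 < c\<close>
      by (auto simp: mult.assoc intro: order_trans mult_left_mono)
  qed (use bh_pos mh_pos cvh_pos \<open>0 < E\<close> N_pos host in \<open>auto simp: rho_def K_def\<close>)
  show "\<bar>chv * Ih T * Sv T\<bar> < (mv - al) * (c * (M * exp (- al * T)))"
    unfolding E_def[symmetric]
  proof (rule abs_vector_incidence_less[where nstar = "bv/mv" and rho = rho])
    show "\<bar>Ih T\<bar> \<le> E" using bound[of T] \<open>0 < T\<close> delay_nonneg by (auto simp: E_def)
    show "\<bar>Sv T - bv/mv\<bar> \<le> c * rho"
      using bound[of T] below_rho[of T] \<open>0 < T\<close> \<open>0 < c\<close> delay_nonneg
      by (auto simp: mult.assoc intro: order_trans mult_left_mono)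
  qed (use bv_pos mv_pos chv_pos \<open>0 < E\<close> vector in \<open>auto simp: rho_def K_def\<close>)
qed

lemma decay_box_not_touched:
  assumes adm: "admissible_decay M al c" and sol: "solution Sh Ih Sv Iv" and "0 < T"
    and bound: "\<And>s. s \<in> {-tau..T} \<Longrightarrow> \<bar>Sh s - bh/mh\<bar> \<le> M * exp (- al * s) \<and> \<bar>Ih s\<bar> \<le> M * exp (- al * s) \<and>
        \<bar>Sv s - bv/mv\<bar> \<le> c * M * exp (- al * s) \<and> \<bar>Iv s\<bar> \<le> c * M * exp (- al * s)"
    and touch: "\<bar>Sh T - bh/mh\<bar> = M * exp (- al * T) \<or> \<bar>Ih T\<bar> = M * exp (- al * T) \<or>
      \<bar>Sv T - bv/mv\<bar> = c * M * exp (- al * T) \<or> \<bar>Iv T\<bar> = c * M * exp (- al * T)"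
  shows False
proof -
  note small = incidences_below_decay_barrier[OF adm \<open>0 < T\<close> bound]
  have below: "\<And>s. 0 \<le> s \<Longrightarrow> s < T \<Longrightarrow> \<bar>Sh s - bh/mh\<bar> \<le> M * exp (- al * s) \<and> \<bar>Ih s\<bar> \<le> M * exp (- al * s) \<and>
      \<bar>Sv s - bv/mv\<bar> \<le> c * M * exp (- al * s) \<and> \<bar>Iv s\<bar> \<le> c * M * exp (- al * s)"
    using bound delay_nonneg by auto
  note derivs = solution_derivatives[OF sol less_imp_le[OF \<open>0 < T\<close>]]
  from touch consider "\<bar>Sh T - bh/mh\<bar> = M * exp (- al * T)" | "\<bar>Ih T\<bar> = M * exp (- al * T)"
    | "\<bar>Sv T - bv/mv\<bar> = c * M * exp (- al * T)" | "\<bar>Iv T\<bar> = c * M * exp (- al * T)"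
    by blast
  then show False
  proof cases
    case 1
    have "(mh - al) * (M * exp (- al * T))
        \<le> \<bar>(bh - cvh * (Iv T / (Sv T + Iv T)) * Sh T - mh * Sh T) - 0 + mh * (Sh T - bh/mh)\<bar>"
      using 1 below by (intro exp_barrier_first_touch[OF DERIV_diff[OF derivs(1) DERIV_const] \<open>0 < T\<close>]) auto
    then show False using small(1)[of T] mh_pos by (simp add: field_simps)
  next
    case 2
    have "(mh - al) * (M * exp (- al * T))
        \<le> \<bar>cvh * (Iv (T - tau) / (Sv (T - tau) + Iv (T - tau))) * Sh (T - tau) - mh * Ih T + mh * Ih T\<bar>"
      using 2 below by (intro exp_barrier_first_touch[OF derivs(2) \<open>0 < T\<close>]) auto
    then show False using small(1)[of "T - tau"] by simp
  next
    case 3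
    have "(mv - al) * (c * (M * exp (- al * T)))
        \<le> \<bar>(bv - chv * Ih T * Sv T - mv * Sv T) - 0 + mv * (Sv T - bv/mv)\<bar>"
      using 3 below
      by (subst mult.assoc[symmetric], intro exp_barrier_first_touch[OF DERIV_diff[OF derivs(3) DERIV_const] \<open>0 < T\<close>]) auto
    then show False using small(2) mv_pos by (simp add: field_simps)
  next
    case 4
    have "(mv - al) * (c * (M * exp (- al * T))) \<le> \<bar>chv * Ih T * Sv T - mv * Iv T + mv * Iv T\<bar>"
      using 4 below by (subst mult.assoc[symmetric], intro exp_barrier_first_touch[OF derivs(4) \<open>0 < T\<close>]) auto
    then show False using small(2) by simp
  qed
qed

lemma E0_exponential_bound:
  assumes adm: "admissible_decay M al c" and sol: "solution Sh Ih Sv Iv"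
    and hist: "\<forall>\<theta>\<in>{-tau..0}. \<bar>Sh \<theta> - bh/mh\<bar> < M \<and> \<bar>Ih \<theta>\<bar> < M \<and> \<bar>Sv \<theta> - bv/mv\<bar> < c * M \<and> \<bar>Iv \<theta>\<bar> < c * M"
  shows "\<forall>t\<ge>-tau. \<bar>Sh t - bh/mh\<bar> < M * exp (- al * t) \<and> \<bar>Ih t\<bar> < M * exp (- al * t) \<and>
                 \<bar>Sv t - bv/mv\<bar> < c * M * exp (- al * t) \<and> \<bar>Iv t\<bar> < c * M * exp (- al * t)"
proof -
  have "0 < M" "0 \<le> al" "0 < c" using adm by (simp_all add: admissible_decay_def)
  define h where "h t = max (max (\<bar>Sh t - bh/mh\<bar> - M * exp (- al * t)) (\<bar>Ih t\<bar> - M * exp (- al * t)))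
    (max (\<bar>Sv t - bv/mv\<bar> - c * M * exp (- al * t)) (\<bar>Iv t\<bar> - c * M * exp (- al * t)))" for t
  have "\<forall>t\<ge>-tau. h t < 0"
  proof (rule negative_if_no_first_zero)
    show "continuous_on {-tau..} h"
      using sol unfolding h_def dde_solution_def by (intro continuous_intros) auto
    show "\<forall>t\<in>{-tau..0}. h t < 0"
    proof
      fix t :: real assume t: "t \<in> {-tau..0}"
      have "M \<le> M * exp (- al * t)" and "c * M \<le> c * M * exp (- al * t)"
        using t \<open>0 < M\<close> \<open>0 \<le> al\<close> \<open>0 < c\<close> mult_nonneg_nonpos[of al t] by simp_all
      moreover have "\<bar>Sh t - bh/mh\<bar> < M" "\<bar>Ih t\<bar> < M" "\<bar>Sv t - bv/mv\<bar> < c * M" "\<bar>Iv t\<bar> < c * M"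
        using hist t by auto
      ultimately show "h t < 0" unfolding h_def max_less_iff_conj by linarith
    qed
  next
    fix T :: real assume "0 < T" "h T = 0" and before: "\<forall>s\<in>{-tau..<T}. h s < 0"
    have bound: "\<bar>Sh s - bh/mh\<bar> \<le> M * exp (- al * s) \<and> \<bar>Ih s\<bar> \<le> M * exp (- al * s) \<and>
        \<bar>Sv s - bv/mv\<bar> \<le> c * M * exp (- al * s) \<and> \<bar>Iv s\<bar> \<le> c * M * exp (- al * s)"
      if "s \<in> {-tau..T}" for s
    proof -
      have "h s \<le> 0" using before that \<open>h T = 0\<close> by (cases "s = T") force+
      then show ?thesis unfolding h_def by simp
    qed
    from \<open>h T = 0\<close> have "\<bar>Sh T - bh/mh\<bar> = M * exp (- al * T) \<or> \<bar>Ih T\<bar> = M * exp (- al * T) \<or>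
        \<bar>Sv T - bv/mv\<bar> = c * M * exp (- al * T) \<or> \<bar>Iv T\<bar> = c * M * exp (- al * T)"
      unfolding h_def by linarith
    then show False using decay_box_not_touched[OF adm sol \<open>0 < T\<close> bound] by blast
  qed (use delay_nonneg in auto)
  then show ?thesis unfolding h_def by auto
qed

lemma decay_parameters:
  assumes R0: "cvh * chv * bh / (mh ^ 2 * mv) < 1"
  obtains c s0 where "0 < c" "0 < s0" "\<And>s. 0 < s \<Longrightarrow> s < s0 \<Longrightarrow> admissible_decay s s c"
proof -
  define lo where "lo = chv * bv / mv ^ 2"
  define hi where "hi = mh ^ 2 * bv / (cvh * bh * mv)"
  define c where "c = (lo + hi) / 2"
  have "lo < hi"
    using R0 bh_pos bv_pos mh_pos mv_pos cvh_pos chv_pos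
    by (simp add: lo_def hi_def field_simps power2_eq_square)
  then have "lo < c" "c < hi" by (simp_all add: c_def)
  have "0 < lo" using bv_pos mv_pos chv_pos by (simp add: lo_def)
  then have "0 < c" using \<open>lo < c\<close> by linarith
  have "0 < mh * (bv/mv) - cvh * c * (bh/mh)"
    using \<open>c < hi\<close> bh_pos bv_pos mh_pos mv_pos cvh_pos by (simp add: hi_def field_simps power2_eq_square)
  moreover have "0 < mv * c - chv * (bv/mv)"
    using \<open>lo < c\<close> mv_pos by (simp add: lo_def field_simps power2_eq_square)
  ultimately have "\<forall>\<^sub>F s in at_right 0. 0 < bv/mv - 2 * c * (s * exp (s * tau)) \<and>
      0 < (mh - s) * (bv/mv - 2 * c * (s * exp (s * tau))) - cvh * c * exp (s * tau) * (bh/mh + s * exp (s * tau)) \<and>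
      0 < (mv - s) * c - chv * (bv/mv + c * (s * exp (s * tau)))"
    using bv_pos mv_pos
    by (intro eventually_conj eventually_pos_at_right_0 continuous_intros) (simp_all add: algebra_simps)
  then obtain s0 where "0 < s0" and s0: "\<And>s. 0 < s \<Longrightarrow> s < s0 \<Longrightarrow> 0 < bv/mv - 2 * c * (s * exp (s * tau)) \<and>
      0 < (mh - s) * (bv/mv - 2 * c * (s * exp (s * tau))) - cvh * c * exp (s * tau) * (bh/mh + s * exp (s * tau)) \<and>
      0 < (mv - s) * c - chv * (bv/mv + c * (s * exp (s * tau)))"
    unfolding eventually_at_right_field by auto
  show ?thesis
    using that[OF \<open>0 < c\<close> \<open>0 < s0\<close>] s0 \<open>0 < c\<close> by (simp add: admissible_decay_def)
qed

lemma E0_exponential_decay: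
  assumes "cvh * chv * bh / (mh ^ 2 * mv) < 1"
  obtains c s0 where "0 < c" "0 < s0"
    "\<And>s Sh Ih Sv Iv. 0 < s \<Longrightarrow> s < s0 \<Longrightarrow> solution Sh Ih Sv Iv \<Longrightarrow>
       \<forall>\<theta>\<in>{-tau..0}. deviation Sh Ih Sv Iv \<theta> < s * min 1 c \<Longrightarrow>
       \<forall>t\<ge>0. deviation Sh Ih Sv Iv t \<le> (1 + c) * s * exp (- s * t)"
proof -
  obtain c s0 where "0 < c" "0 < s0" and adm: "\<And>s. 0 < s \<Longrightarrow> s < s0 \<Longrightarrow> admissible_decay s s c"
    using decay_parameters[OF assms] by blast
  show ?thesis
  proof (rule that[OF \<open>0 < c\<close> \<open>0 < s0\<close>], intro allI impI)
    fix s Sh Ih Sv Iv and t :: real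
    assume "0 < s" "s < s0" "solution Sh Ih Sv Iv" "0 \<le> t"
      and small: "\<forall>\<theta>\<in>{-tau..0}. deviation Sh Ih Sv Iv \<theta> < s * min 1 c"
    have "s * min 1 c \<le> s" "s * min 1 c \<le> c * s"
      using \<open>0 < s\<close> \<open>0 < c\<close> by (simp_all add: mult_left_le min.coboundedI2 mult.commute)
    then have "\<forall>\<theta>\<in>{-tau..0}. \<bar>Sh \<theta> - bh/mh\<bar> < s \<and> \<bar>Ih \<theta>\<bar> < s \<and> \<bar>Sv \<theta> - bv/mv\<bar> < c * s \<and> \<bar>Iv \<theta>\<bar> < c * s"
      using small unfolding dev_def max_less_iff_conj by (auto simp: mult.commute)
    from E0_exponential_bound[OF adm[OF \<open>0 < s\<close> \<open>s < s0\<close>] \<open>solution Sh Ih Sv Iv\<close> this]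
    have "\<bar>Sh t - bh/mh\<bar> < s * exp (- s * t)" "\<bar>Ih t\<bar> < s * exp (- s * t)"
        "\<bar>Sv t - bv/mv\<bar> < c * s * exp (- s * t)" "\<bar>Iv t\<bar> < c * s * exp (- s * t)"
      using \<open>0 \<le> t\<close> delay_nonneg by auto
    moreover have "s * exp (- s * t) \<le> (1 + c) * s * exp (- s * t)" "c * s * exp (- s * t) \<le> (1 + c) * s * exp (- s * t)"
      using \<open>0 < s\<close> \<open>0 < c\<close> by (simp_all add: algebra_simps)
    ultimately show "deviation Sh Ih Sv Iv t \<le> (1 + c) * s * exp (- s * t)"
      unfolding dev_def by (intro max.boundedI) linarith+
  qed
qed

lemma E0_stable_if_R0_lt_1:
  assumes "cvh * chv * bh / (mh ^ 2 * mv) < 1"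
  shows "E0_stable bh bv mh mv cvh chv tau"
  unfolding E0_stable_def
proof (intro allI impI)
  fix e :: real assume "0 < e"
  obtain c s0 where "0 < c" "0 < s0" and decay: "\<And>s Sh Ih Sv Iv. 0 < s \<Longrightarrow> s < s0 \<Longrightarrow> solution Sh Ih Sv Iv \<Longrightarrow>
       \<forall>\<theta>\<in>{-tau..0}. deviation Sh Ih Sv Iv \<theta> < s * min 1 c \<Longrightarrow>
       \<forall>t\<ge>0. deviation Sh Ih Sv Iv t \<le> (1 + c) * s * exp (- s * t)"
    using E0_exponential_decay[OF assms] by blast
  define s where "s = min (s0 / 2) (e / (2 * (1 + c)))"
  have "0 < s" "s < s0" using \<open>0 < e\<close> \<open>0 < c\<close> \<open>0 < s0\<close> by (auto simp: s_def)
  have "(1 + c) * s \<le> (1 + c) * (e / (2 * (1 + c)))"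
    using \<open>0 < c\<close> by (intro mult_left_mono) (auto simp: s_def)
  also have "\<dots> = e / 2" using \<open>0 < c\<close> by (simp add: field_simps)
  finally have "(1 + c) * s < e" using \<open>0 < e\<close> by linarith
  show "\<exists>\<delta>>0. \<forall>Sh Ih Sv Iv. solution Sh Ih Sv Iv \<and> history_in_Cplus tau Sh Ih Sv Iv \<and>
      (\<forall>\<theta>\<in>{-tau..0}. deviation Sh Ih Sv Iv \<theta> < \<delta>) \<longrightarrow> (\<forall>t\<ge>0. deviation Sh Ih Sv Iv t < e)"
  proof (intro exI[of _ "s * min 1 c"] conjI allI impI)
    show "0 < s * min 1 c" using \<open>0 < s\<close> \<open>0 < c\<close> by simp
    fix Sh Ih Sv Iv and t :: real
    assume "solution Sh Ih Sv Iv \<and> history_in_Cplus tau Sh Ih Sv Iv \<and>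
      (\<forall>\<theta>\<in>{-tau..0}. deviation Sh Ih Sv Iv \<theta> < s * min 1 c)" "0 \<le> t"
    then have "deviation Sh Ih Sv Iv t \<le> (1 + c) * s * exp (- s * t)"
      using decay[OF \<open>0 < s\<close> \<open>s < s0\<close>] by simp
    also have "\<dots> \<le> (1 + c) * s"
      using \<open>0 < s\<close> \<open>0 < c\<close> \<open>0 \<le> t\<close> by (simp add: mult_le_cancel_left1)
    finally show "deviation Sh Ih Sv Iv t < e" using \<open>(1 + c) * s < e\<close> by linarith
  qed
qed

lemma E0_attractive_if_R0_lt_1:
  assumes "cvh * chv * bh / (mh ^ 2 * mv) < 1"
  shows "E0_attractive bh bv mh mv cvh chv tau"
  unfolding E0_attractive_def
proof -
  obtain c s0 where "0 < c" "0 < s0" and decay: "\<And>s Sh Ih Sv Iv. 0 < s \<Longrightarrow> s < s0 \<Longrightarrow> solution Sh Ih Sv Iv \<Longrightarrow>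
       \<forall>\<theta>\<in>{-tau..0}. deviation Sh Ih Sv Iv \<theta> < s * min 1 c \<Longrightarrow>
       \<forall>t\<ge>0. deviation Sh Ih Sv Iv t \<le> (1 + c) * s * exp (- s * t)"
    using E0_exponential_decay[OF assms] by blast
  define s where "s = s0 / 2"
  have "0 < s" "s < s0" using \<open>0 < s0\<close> by (simp_all add: s_def)
  show "\<exists>\<delta>>0. \<forall>Sh Ih Sv Iv. solution Sh Ih Sv Iv \<and> history_in_Cplus tau Sh Ih Sv Iv \<and>
      (\<forall>\<theta>\<in>{-tau..0}. deviation Sh Ih Sv Iv \<theta> < \<delta>) \<longrightarrow> (deviation Sh Ih Sv Iv \<longlongrightarrow> 0) at_top"
  proof (intro exI[of _ "s * min 1 c"] conjI allI impI)
    show "0 < s * min 1 c" using \<open>0 < s\<close> \<open>0 < c\<close> by simp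
    fix Sh Ih Sv Iv
    assume "solution Sh Ih Sv Iv \<and> history_in_Cplus tau Sh Ih Sv Iv \<and>
      (\<forall>\<theta>\<in>{-tau..0}. deviation Sh Ih Sv Iv \<theta> < s * min 1 c)"
    then have "\<forall>t\<ge>0. deviation Sh Ih Sv Iv t \<le> (1 + c) * s * exp (- s * t)"
      using decay[OF \<open>0 < s\<close> \<open>s < s0\<close>] by simp
    then have upper: "\<forall>\<^sub>F t in at_top. deviation Sh Ih Sv Iv t \<le> (1 + c) * s * exp (- s * t)"
      unfolding eventually_at_top_linorder by blast
    have lower: "\<forall>\<^sub>F t in at_top. 0 \<le> deviation Sh Ih Sv Iv t"
      by (simp add: dev_def le_max_iff_disj)
    have "((\<lambda>t. (1 + c) * s * exp (- s * t)) \<longlongrightarrow> 0) at_top"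
      using \<open>0 < s\<close> by (intro tendsto_mult_right_zero filterlim_compose[OF exp_at_bot]
          filterlim_tendsto_neg_mult_at_bot[OF tendsto_const] filterlim_ident) auto
    from tendsto_sandwich[OF lower upper tendsto_const this]
    show "(deviation Sh Ih Sv Iv \<longlongrightarrow> 0) at_top" .
  qed
qed


section \<open>Solutions with constant history\<close>

(* The state is (Sh, Ih, Iv): Sv is eliminated through Sv + Iv = n0, which is invariant when n0 = bv/mv.
   The clamps make the field globally Lipschitz and do not change it on [0,X1] x [0,X2] x [0,n0]. *)
definition truncated_field ::
  "real \<Rightarrow> real \<Rightarrow> real \<Rightarrow> real \<times> real \<times> real \<Rightarrow> real \<times> real \<times> real \<Rightarrow> real \<times> real \<times> real" where
  "truncated_field n0 X1 X2 p q =
     (bh - cvh / n0 * (clamp 0 n0 (snd (snd p)) * clamp 0 X1 (fst p)) - mh * fst p,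
      cvh / n0 * (clamp 0 n0 (snd (snd q)) * clamp 0 X1 (fst q)) - mh * fst (snd p),
      chv * (clamp 0 X2 (fst (snd p)) * clamp 0 n0 (n0 - snd (snd p))) - mv * snd (snd p))"

lemma lipschitz_truncated_field:
  assumes "0 \<le> n0" "0 \<le> X1" "0 \<le> X2"
  shows "\<exists>L. L-lipschitz_on UNIV (\<lambda>(p, q). truncated_field n0 X1 X2 p q)"
  unfolding truncated_field_def case_prod_beta
  by (rule exI, (rule lipschitz_on_Pair lipschitz_on_diff lipschitz_on_constant lipschitz_on_cmult_real
      lipschitz_on_mult_clamp lipschitz_on_fst lipschitz_on_snd lipschitz_on_id | use assms in linarith)+)

lemma truncated_field_inward:
  assumes "0 < n0" "0 < X1" "bh < mh * X1" "cvh * X1 < mh * X2"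
  shows "fst p = 0 \<Longrightarrow> 0 < fst (truncated_field n0 X1 X2 p q)"
    and "fst p = X1 \<Longrightarrow> fst (truncated_field n0 X1 X2 p q) < 0"
    and "- mh * fst (snd p) \<le> fst (snd (truncated_field n0 X1 X2 p q))"
    and "fst (snd p) = X2 \<Longrightarrow> fst (snd (truncated_field n0 X1 X2 p q)) < 0"
    and "- mv * snd (snd p) \<le> snd (snd (truncated_field n0 X1 X2 p q))"
    and "snd (snd p) = n0 \<Longrightarrow> snd (snd (truncated_field n0 X1 X2 p q)) < 0"
proof -
  have "0 < mh * X2" using assms(2,4) cvh_pos mult_pos_pos[of cvh X1] by linarith
  then have "0 < X2" using mh_pos by (simp add: zero_less_mult_iff)
  have host: "0 \<le> cvh / n0 * (clamp 0 n0 z * clamp 0 X1 y)" "cvh / n0 * (clamp 0 n0 z * clamp 0 X1 y) \<le> cvh * X1"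
    for y z
  proof -
    have "0 \<le> clamp 0 n0 z * clamp 0 X1 y" "clamp 0 n0 z * clamp 0 X1 y \<le> n0 * X1"
      using clamp_real_bounds[of n0 z] clamp_real_bounds[of X1 y] assms(1,2) by (auto intro: mult_mono)
    then show "0 \<le> cvh / n0 * (clamp 0 n0 z * clamp 0 X1 y)" "cvh / n0 * (clamp 0 n0 z * clamp 0 X1 y) \<le> cvh * X1"
      using assms(1) cvh_pos mult_left_mono[of _ "n0 * X1" "cvh / n0"] by auto
  qed
  have vector: "0 \<le> chv * (clamp 0 X2 y * clamp 0 n0 z)" for y z
    using clamp_real_bounds[of X2 y] clamp_real_bounds[of n0 z] assms(1) \<open>0 < X2\<close> chv_pos by simp
  show "fst p = 0 \<Longrightarrow> 0 < fst (truncated_field n0 X1 X2 p q)"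
    using assms(2) bh_pos by (simp add: truncated_field_def)
  show "fst p = X1 \<Longrightarrow> fst (truncated_field n0 X1 X2 p q) < 0"
    using host(1)[of "snd (snd p)" "fst p"] assms(3) by (simp add: truncated_field_def)
  show "- mh * fst (snd p) \<le> fst (snd (truncated_field n0 X1 X2 p q))"
    using host(1)[of "snd (snd q)" "fst q"] by (simp add: truncated_field_def)
  show "fst (snd p) = X2 \<Longrightarrow> fst (snd (truncated_field n0 X1 X2 p q)) < 0"
    using host(2)[of "snd (snd q)" "fst q"] assms(4) by (simp add: truncated_field_def)
  show "- mv * snd (snd p) \<le> snd (snd (truncated_field n0 X1 X2 p q))"
    using vector[of "fst (snd p)" "n0 - snd (snd p)"] by (simp add: truncated_field_def)
  show "snd (snd p) = n0 \<Longrightarrow> snd (snd (truncated_field n0 X1 X2 p q)) < 0"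
    using assms(1) mult_pos_pos[OF mv_pos assms(1)] by (simp add: truncated_field_def)
qed

lemma truncated_box_not_touched:
  fixes x :: "real \<Rightarrow> real \<times> real \<times> real" and B :: "real \<Rightarrow> real"
  assumes "0 < n0" "0 < X1" "bh < mh * X1" "cvh * X1 < mh * X2" "0 < T"
    and deriv: "\<forall>t\<ge>0. (x has_vector_derivative truncated_field n0 X1 X2 (x t) (x (t - tau))) (at t within {0..})"
    and B: "0 < B T" "(B has_real_derivative - (mh + mv) * B T) (at T within {0..})"
    and inside: "\<And>s. 0 \<le> s \<Longrightarrow> s < T \<Longrightarrow> x s \<in> {0..X1} \<times> {B s..X2} \<times> {B s..n0}"
    and touch: "fst (x T) \<in> {0, X1} \<or> fst (snd (x T)) \<in> {B T, X2} \<or> snd (snd (x T)) \<in> {B T, n0}"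
  shows False
proof -
  define F where "F = truncated_field n0 X1 X2 (x T) (x (T - tau))"
  note inward = truncated_field_inward[OF assms(1-4), where p = "x T" and q = "x (T - tau)", folded F_def]
  have "0 \<le> T" using \<open>0 < T\<close> by simp
  note d = deriv[rule_format, OF this, folded F_def]
  have d1: "((\<lambda>t. fst (x t)) has_real_derivative fst F) (at T within {0..})"
    and d2: "((\<lambda>t. fst (snd (x t))) has_real_derivative fst (snd F)) (at T within {0..})"
    and d3: "((\<lambda>t. snd (snd (x t))) has_real_derivative snd (snd F)) (at T within {0..})"
    using has_vector_derivative_fst[OF d] has_vector_derivative_fst[OF has_vector_derivative_snd[OF d]]
      has_vector_derivative_snd[OF has_vector_derivative_snd[OF d]]
    unfolding has_real_derivative_iff_has_vector_derivative by simp_all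
  note touch_deriv = first_touch_deriv_le[OF _ _ \<open>0 < T\<close>]
  from touch consider "fst (x T) = 0" | "fst (x T) = X1" | "fst (snd (x T)) = B T" | "fst (snd (x T)) = X2"
    | "snd (snd (x T)) = B T" | "snd (snd (x T)) = n0"
    by blast
  then show False
  proof cases
    case 1
    have "fst F \<le> 0" using 1 inside by (intro touch_deriv[OF DERIV_const d1]) (auto simp: mem_Times_iff)
    then show False using inward(1)[OF 1] by simp
  next
    case 2
    have "0 \<le> fst F" using 2 inside by (intro touch_deriv[OF d1 DERIV_const]) (auto simp: mem_Times_iff)
    then show False using inward(2)[OF 2] by simp
  next
    case 3
    have "fst (snd F) \<le> - (mh + mv) * B T"
      using 3 inside by (intro touch_deriv[OF B(2) d2]) (auto simp: mem_Times_iff)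
    then show False using 3 inward(3) mult_pos_pos[OF mv_pos B(1)] by (simp add: algebra_simps)
  next
    case 4
    have "0 \<le> fst (snd F)" using 4 inside by (intro touch_deriv[OF d2 DERIV_const]) (auto simp: mem_Times_iff)
    then show False using inward(4)[OF 4] by simp
  next
    case 5
    have "snd (snd F) \<le> - (mh + mv) * B T"
      using 5 inside by (intro touch_deriv[OF B(2) d3]) (auto simp: mem_Times_iff)
    then show False using 5 inward(5) mult_pos_pos[OF mh_pos B(1)] by (simp add: algebra_simps)
  next
    case 6
    have "0 \<le> snd (snd F)" using 6 inside by (intro touch_deriv[OF d3 DERIV_const]) (auto simp: mem_Times_iff)
    then show False using inward(6)[OF 6] by simp
  qed
qed

lemma truncated_solution_stays_in_box:
  fixes x :: "real \<Rightarrow> real \<times> real \<times> real"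
  assumes "0 < n0" "0 < X1" "bh < mh * X1" "cvh * X1 < mh * X2" "0 < lb"
    and cont: "continuous_on {-tau..} x"
    and hist: "\<forall>t\<in>{-tau..0}. x t \<in> {0<..<X1} \<times> {lb<..<X2} \<times> {lb<..<n0}"
    and deriv: "\<forall>t\<ge>0. (x has_vector_derivative truncated_field n0 X1 X2 (x t) (x (t - tau))) (at t within {0..})"
  shows "\<forall>t\<ge>-tau. x t \<in> {0..X1} \<times> {0..X2} \<times> {0..n0}"
proof -
  \<comment> \<open>The field may vanish on the faces Ih = 0 and Iv = 0, so positivity is enforced through a
    barrier B that decays faster than these components can.\<close>
  define B where "B t = lb * exp (- (mh + mv) * (t + tau))" for t
  have "0 < B t" for t using \<open>0 < lb\<close> by (simp add: B_def)
  have dB: "(B has_real_derivative - (mh + mv) * B T) (at T within {0..})" for T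
    unfolding B_def by (auto intro!: derivative_eq_intros simp: algebra_simps)
  define h where "h t = max (max (- fst (x t)) (fst (x t) - X1))
      (max (max (B t - fst (snd (x t))) (fst (snd (x t)) - X2)) (max (B t - snd (snd (x t))) (snd (snd (x t)) - n0)))"
    for t
  have "\<forall>t\<ge>-tau. h t < 0"
  proof (rule negative_if_no_first_zero)
    show "continuous_on {-tau..} h"
      unfolding h_def B_def using cont by (intro continuous_intros)
    show "\<forall>t\<in>{-tau..0}. h t < 0"
    proof
      fix t assume t: "t \<in> {-tau..0}"
      have "0 \<le> (mh + mv) * (t + tau)" by (intro mult_nonneg_nonneg) (use t mh_pos mv_pos in auto)
      then have "exp (- (mh + mv) * (t + tau)) \<le> 1" by (simp only: mult_minus_left exp_le_one_iff neg_le_0_iff_le)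
      then have "B t \<le> lb" using \<open>0 < lb\<close> by (simp add: B_def mult_left_le)
      moreover have "x t \<in> {0<..<X1} \<times> {lb<..<X2} \<times> {lb<..<n0}" using hist t by blast
      ultimately show "h t < 0" unfolding h_def by (auto simp: mem_Times_iff)
    qed
  next
    fix T :: real assume "0 < T" "h T = 0" and before: "\<forall>s\<in>{-tau..<T}. h s < 0"
    have "x s \<in> {0..X1} \<times> {B s..X2} \<times> {B s..n0}" if "0 \<le> s" "s < T" for s
    proof -
      have "h s < 0" using before that delay_nonneg by auto
      then show ?thesis unfolding h_def by (simp add: mem_Times_iff)
    qed
    moreover from \<open>h T = 0\<close>
    have "fst (x T) \<in> {0, X1} \<or> fst (snd (x T)) \<in> {B T, X2} \<or> snd (snd (x T)) \<in> {B T, n0}"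
      unfolding h_def by auto
    ultimately show False
      using truncated_box_not_touched[OF assms(1-4) \<open>0 < T\<close> deriv \<open>0 < B T\<close> dB] by blast
  qed (use delay_nonneg in auto)
  show ?thesis
  proof (intro allI impI)
    fix t :: real assume "-tau \<le> t"
    then have "h t < 0" using \<open>\<forall>t\<ge>-tau. h t < 0\<close> by blast
    then show "x t \<in> {0..X1} \<times> {0..X2} \<times> {0..n0}"
      using \<open>0 < B t\<close> unfolding h_def max_less_iff_conj mem_Times_iff by simp
  qed
qed

lemma truncated_field_on_box:
  assumes "0 < n0" "p \<in> {0..X1} \<times> {0..X2} \<times> {0..n0}" "q \<in> {0..X1} \<times> {0..X2} \<times> {0..n0}"
  shows "truncated_field n0 X1 X2 p q =
    (bh - cvh * (snd (snd p) / n0) * fst p - mh * fst p,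
     cvh * (snd (snd q) / n0) * fst q - mh * fst (snd p),
     chv * fst (snd p) * (n0 - snd (snd p)) - mv * snd (snd p))"
  using assms by (auto simp: truncated_field_def interval_cbox[symmetric] mult_ac mem_Times_iff)

lemma solution_with_constant_history:
  assumes "0 < eta" "eta < bv/mv"
  obtains Sh Ih Sv Iv where "solution Sh Ih Sv Iv"
    "\<forall>\<theta>\<in>{-tau..0}. Sh \<theta> = bh/mh \<and> Ih \<theta> = eta \<and> Sv \<theta> = bv/mv - eta \<and> Iv \<theta> = eta"
proof -
  define n0 where "n0 = bv/mv"
  define X1 where "X1 = 2 * bh/mh"
  define X2 where "X2 = cvh * X1/mh + n0"
  have "0 < n0" "0 < X1" using bv_pos mv_pos bh_pos mh_pos by (simp_all add: n0_def X1_def)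
  have "bh/mh < X1" using bh_pos mh_pos by (simp add: X1_def field_simps)
  have "0 < cvh * X1/mh" using \<open>0 < X1\<close> cvh_pos mh_pos by simp
  then have "n0 < X2" "bh < mh * X1" "cvh * X1 < mh * X2"
    using bh_pos mh_pos \<open>0 < n0\<close> by (simp_all add: X1_def X2_def algebra_simps)
  obtain L where "L-lipschitz_on UNIV (\<lambda>(p, q). truncated_field n0 X1 X2 p q)"
    using lipschitz_truncated_field \<open>0 < n0\<close> \<open>0 < X1\<close> \<open>n0 < X2\<close> by fastforce
  from lipschitz_delay_ivp.solution_exists[OF lipschitz_delay_ivp.intro[OF this delay_nonneg continuous_on_const]]
  obtain x where cont: "continuous_on {-tau..} x" and x_hist: "\<forall>t\<in>{-tau..0}. x t = (bh/mh, eta, eta)"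
    and deriv: "\<forall>t\<ge>0. (x has_vector_derivative truncated_field n0 X1 X2 (x t) (x (t - tau))) (at t within {0..})"
    by blast
  have "\<forall>t\<in>{-tau..0}. x t \<in> {0<..<X1} \<times> {eta/2<..<X2} \<times> {eta/2<..<n0}"
    using x_hist assms bh_pos mh_pos \<open>bh/mh < X1\<close> \<open>n0 < X2\<close> by (auto simp: n0_def)
  from truncated_solution_stays_in_box[OF \<open>0 < n0\<close> \<open>0 < X1\<close> \<open>bh < mh * X1\<close> \<open>cvh * X1 < mh * X2\<close> _ cont this deriv]
  have box: "\<forall>t\<ge>-tau. x t \<in> {0..X1} \<times> {0..X2} \<times> {0..n0}" using assms by simp
  define Sh where "Sh t = fst (x t)" for t
  define Ih where "Ih t = fst (snd (x t))" for t
  define Iv where "Iv t = snd (snd (x t))" for t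
  have field: "truncated_field n0 X1 X2 (x t) (x (t - tau)) =
      (bh - cvh * (Iv t / (n0 - Iv t + Iv t)) * Sh t - mh * Sh t,
       cvh * (Iv (t - tau) / (n0 - Iv (t - tau) + Iv (t - tau))) * Sh (t - tau) - mh * Ih t,
       chv * Ih t * (n0 - Iv t) - mv * Iv t)" if "0 \<le> t" for t
    using truncated_field_on_box[OF \<open>0 < n0\<close>] box that delay_nonneg by (simp add: Sh_def Ih_def Iv_def)
  show ?thesis
  proof (rule that)
    show "solution Sh Ih (\<lambda>t. n0 - Iv t) Iv"
      unfolding dde_solution_def
    proof (intro conjI allI impI)
      fix t :: real assume "0 \<le> t"
      note d = deriv[rule_format, OF this, unfolded field[OF this]]
      show "(Sh has_real_derivative bh - cvh * (Iv t / (n0 - Iv t + Iv t)) * Sh t - mh * Sh t) (at t within {0..})"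
        using has_vector_derivative_fst[OF d]
        unfolding has_real_derivative_iff_has_vector_derivative Sh_def by simp
      show "(Ih has_real_derivative cvh * (Iv (t - tau) / (n0 - Iv (t - tau) + Iv (t - tau))) * Sh (t - tau) - mh * Ih t)
          (at t within {0..})"
        using has_vector_derivative_fst[OF has_vector_derivative_snd[OF d]]
        unfolding has_real_derivative_iff_has_vector_derivative Ih_def by simp
      have Iv_deriv: "(Iv has_real_derivative chv * Ih t * (n0 - Iv t) - mv * Iv t) (at t within {0..})"
        using has_vector_derivative_snd[OF has_vector_derivative_snd[OF d]]
        unfolding has_real_derivative_iff_has_vector_derivative Iv_def by simp
      then show "(Iv has_real_derivative chv * Ih t * (n0 - Iv t) - mv * Iv t) (at t within {0..})" .
      have "0 - (chv * Ih t * (n0 - Iv t) - mv * Iv t) = bv - chv * Ih t * (n0 - Iv t) - mv * (n0 - Iv t)"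
        using mv_pos by (simp add: n0_def field_simps)
      from DERIV_diff[OF DERIV_const[of n0] Iv_deriv, unfolded this]
      show "((\<lambda>t. n0 - Iv t) has_real_derivative bv - chv * Ih t * (n0 - Iv t) - mv * (n0 - Iv t))
          (at t within {0..})" .
    qed (use cont \<open>0 < n0\<close> in \<open>auto simp: Sh_def Ih_def Iv_def intro!: continuous_intros\<close>)
    show "\<forall>\<theta>\<in>{-tau..0}. Sh \<theta> = bh/mh \<and> Ih \<theta> = eta \<and> n0 - Iv \<theta> = bv/mv - eta \<and> Iv \<theta> = eta"
      using x_hist by (simp add: Sh_def Ih_def Iv_def n0_def)
  qed
qed

section \<open>Instability\<close>

(* Within eps of E0 the incidence terms feeding Ih and Iv on the region Ih >= z exp(lam t),
   Iv >= c z exp(lam t) exceed the decay terms by the growth rate lam. *)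
definition admissible_growth :: "real \<Rightarrow> real \<Rightarrow> real \<Rightarrow> bool" where
  "admissible_growth eps lam c \<longleftrightarrow> 0 < eps \<and> eps < bh/mh \<and> eps < bv/mv \<and> 0 \<le> lam \<and> 0 < c \<and>
     (mh + lam) * (bv/mv + 2 * eps) < cvh * c * exp (- lam * tau) * (bh/mh - eps) \<and>
     (mv + lam) * c < chv * (bv/mv - eps)"

lemma growth_box_not_touched:
  assumes adm: "admissible_growth eps lam c" and sol: "solution Sh Ih Sv Iv" and "0 < T" "0 < zeta"
    and above: "\<And>s. s \<in> {-tau..T} \<Longrightarrow> zeta * exp (lam * s) \<le> Ih s \<and> c * zeta * exp (lam * s) \<le> Iv s"
    and near_E0: "\<And>s. -tau \<le> s \<Longrightarrow> bh/mh - eps \<le> Sh s \<and> Sv s + Iv s \<le> bv/mv + 2 * eps"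
    and "bv/mv - eps \<le> Sv T"
    and touch: "Ih T = zeta * exp (lam * T) \<or> Iv T = c * zeta * exp (lam * T)"
  shows False
proof -
  have "0 < eps" "eps < bh/mh" "eps < bv/mv" "0 < c"
    and host: "(mh + lam) * (bv/mv + 2 * eps) < cvh * c * exp (- lam * tau) * (bh/mh - eps)"
    and vector: "(mv + lam) * c < chv * (bv/mv - eps)"
    using adm by (simp_all add: admissible_growth_def)
  define Z where "Z = zeta * exp (lam * T)"
  have "0 < Z" using \<open>0 < zeta\<close> by (simp add: Z_def)
  have dZ: "((\<lambda>t. w * (zeta * exp (lam * t))) has_real_derivative lam * (w * Z)) (at T within {0..})" for w
    unfolding Z_def by (auto intro!: derivative_eq_intros)
  have "-tau \<le> T - tau" "T - tau \<le> T" using \<open>0 < T\<close> delay_nonneg by auto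
  note derivs = solution_derivatives[OF sol less_imp_le[OF \<open>0 < T\<close>]]
  note touch_deriv = first_touch_deriv_le[OF dZ _ \<open>0 < T\<close>]
  from touch consider "Ih T = Z" | "Iv T = c * Z" by (auto simp: Z_def mult.assoc)
  then show False
  proof cases
    case 1
    have "cvh * (Iv (T - tau) / (Sv (T - tau) + Iv (T - tau))) * Sh (T - tau) - mh * Ih T \<le> lam * (1 * Z)"
      using 1 above delay_nonneg by (intro touch_deriv[OF derivs(2)]) (auto simp: Z_def)
    moreover have "c * exp (- lam * tau) * Z * (bh/mh - eps) / (bv/mv + 2 * eps)
        \<le> Iv (T - tau) / (Sv (T - tau) + Iv (T - tau)) * Sh (T - tau)"
    proof (rule incidence_lower_bound)
      show "c * exp (- lam * tau) * Z \<le> Iv (T - tau)"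
        using above[of "T - tau"] \<open>-tau \<le> T - tau\<close> \<open>T - tau \<le> T\<close>
        by (simp add: Z_def mult_ac flip: exp_add) (simp add: algebra_simps)
      show "0 < Sv (T - tau) + Iv (T - tau)" using sol \<open>-tau \<le> T - tau\<close> by (simp add: dde_solution_def)
    qed (use near_E0[OF \<open>-tau \<le> T - tau\<close>] \<open>0 < c\<close> \<open>0 < Z\<close> \<open>eps < bh/mh\<close> in auto)
    then have "cvh * (c * exp (- lam * tau) * Z * (bh/mh - eps) / (bv/mv + 2 * eps))
        \<le> cvh * (Iv (T - tau) / (Sv (T - tau) + Iv (T - tau)) * Sh (T - tau))"
      using cvh_pos by (intro mult_left_mono) auto
    moreover have "(mh + lam) * Z < cvh * (c * exp (- lam * tau) * Z * (bh/mh - eps) / (bv/mv + 2 * eps))"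
      using mult_strict_right_mono[OF host \<open>0 < Z\<close>] \<open>0 < eps\<close> bv_pos mv_pos
      by (simp add: pos_less_divide_eq add_pos_pos mult_ac)
    ultimately show False using 1 by (simp add: algebra_simps)
  next
    case 2
    have "chv * Ih T * Sv T - mv * Iv T \<le> lam * (c * Z)"
      using 2 above delay_nonneg by (intro touch_deriv[OF derivs(4)]) (auto simp: Z_def mult.assoc)
    moreover have "(mv + lam) * (c * Z) < chv * (Z * (bv/mv - eps))"
      using mult_strict_right_mono[OF vector \<open>0 < Z\<close>] by (simp add: algebra_simps)
    moreover have "Z * (bv/mv - eps) \<le> Ih T * Sv T"
      using above[of T] \<open>bv/mv - eps \<le> Sv T\<close> \<open>0 < Z\<close> \<open>eps < bv/mv\<close> \<open>0 < T\<close> delay_nonneg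
      by (intro mult_mono) (auto simp: Z_def)
    then have "chv * (Z * (bv/mv - eps)) \<le> chv * (Ih T * Sv T)"
      using chv_pos by (intro mult_left_mono) auto
    ultimately show False using 2 by (simp add: algebra_simps)
  qed
qed

lemma infection_grows_near_E0:
  assumes adm: "admissible_growth eps lam c" and "0 < zeta" and sol: "solution Sh Ih Sv Iv"
    and hist: "\<forall>\<theta>\<in>{-tau..0}. zeta * exp (lam * \<theta>) < Ih \<theta> \<and> c * zeta * exp (lam * \<theta>) < Iv \<theta> \<and>
                 bh/mh - eps \<le> Sh \<theta> \<and> Sv \<theta> + Iv \<theta> \<le> bv/mv + 2 * eps"
    and near: "\<forall>t\<ge>0. deviation Sh Ih Sv Iv t < eps"
  shows "\<forall>t\<ge>-tau. zeta * exp (lam * t) < Ih t \<and> c * zeta * exp (lam * t) < Iv t"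
proof -
  have near_E0: "bh/mh - eps \<le> Sh t \<and> Sv t + Iv t \<le> bv/mv + 2 * eps" if "-tau \<le> t" for t
  proof (cases "0 \<le> t")
    case True
    then show ?thesis using near unfolding dev_def max_less_iff_conj by force
  qed (use hist that in auto)
  define h where "h t = max (zeta * exp (lam * t) - Ih t) (c * zeta * exp (lam * t) - Iv t)" for t
  have "\<forall>t\<ge>-tau. h t < 0"
  proof (rule negative_if_no_first_zero)
    show "continuous_on {-tau..} h"
      using sol unfolding h_def dde_solution_def by (intro continuous_intros) auto
    show "\<forall>t\<in>{-tau..0}. h t < 0"
      using hist by (auto simp: h_def)
  next
    fix T :: real assume "0 < T" "h T = 0" and before: "\<forall>s\<in>{-tau..<T}. h s < 0"
    have above: "zeta * exp (lam * s) \<le> Ih s \<and> c * zeta * exp (lam * s) \<le> Iv s" if "s \<in> {-tau..T}" for s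
    proof -
      have "h s \<le> 0" using before that \<open>h T = 0\<close> by (cases "s = T") force+
      then show ?thesis unfolding h_def by simp
    qed
    have "\<bar>Sv T - bv/mv\<bar> < eps" using near \<open>0 < T\<close> unfolding dev_def max_less_iff_conj by auto
    then have "bv/mv - eps \<le> Sv T" by (simp add: abs_less_iff)
    moreover from \<open>h T = 0\<close> have "Ih T = zeta * exp (lam * T) \<or> Iv T = c * zeta * exp (lam * T)"
      unfolding h_def by linarith
    ultimately show False
      using growth_box_not_touched[OF adm sol \<open>0 < T\<close> \<open>0 < zeta\<close>] above near_E0 by blast
  qed (use delay_nonneg in auto)
  then show ?thesis unfolding h_def by auto
qed

lemma growth_parameters:
  assumes R0: "1 < cvh * chv * bh / (mh ^ 2 * mv)"
  obtains c s where "admissible_growth s s c"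
proof -
  define lo where "lo = mh ^ 2 * bv / (cvh * bh * mv)"
  define hi where "hi = chv * bv / mv ^ 2"
  define c where "c = (lo + hi) / 2"
  have "lo < hi"
    using R0 bh_pos bv_pos mh_pos mv_pos cvh_pos chv_pos
    by (simp add: lo_def hi_def field_simps power2_eq_square)
  then have "lo < c" "c < hi" by (simp_all add: c_def)
  have "0 < lo" using bh_pos bv_pos mh_pos mv_pos cvh_pos by (simp add: lo_def)
  then have "0 < c" using \<open>lo < c\<close> by linarith
  have "0 < cvh * c * (bh/mh) - mh * (bv/mv)"
    using \<open>lo < c\<close> bh_pos bv_pos mh_pos mv_pos cvh_pos by (simp add: lo_def field_simps power2_eq_square)
  moreover have "0 < chv * (bv/mv) - mv * c"
    using \<open>c < hi\<close> mv_pos by (simp add: hi_def field_simps power2_eq_square)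
  ultimately have "\<forall>\<^sub>F s in at_right 0. 0 < bh/mh - s \<and> 0 < bv/mv - s \<and>
      0 < cvh * c * exp (- s * tau) * (bh/mh - s) - (mh + s) * (bv/mv + 2 * s) \<and>
      0 < chv * (bv/mv - s) - (mv + s) * c"
    using bh_pos mh_pos bv_pos mv_pos
    by (intro eventually_conj eventually_pos_at_right_0 continuous_intros) (simp_all add: algebra_simps)
  then obtain s0 where "0 < s0" and s0: "\<And>s. 0 < s \<Longrightarrow> s < s0 \<Longrightarrow> 0 < bh/mh - s \<and> 0 < bv/mv - s \<and>
      0 < cvh * c * exp (- s * tau) * (bh/mh - s) - (mh + s) * (bv/mv + 2 * s) \<and>
      0 < chv * (bv/mv - s) - (mv + s) * c"
    unfolding eventually_at_right_field by auto
  have "0 < s0 / 2" "s0 / 2 < s0" using \<open>0 < s0\<close> by simp_all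
  from s0[OF this] show ?thesis
    using that[of "s0 / 2" c] \<open>0 < c\<close> \<open>0 < s0 / 2\<close> by (simp add: admissible_growth_def)
qed

lemma E0_unstable_if_R0_gt_1:
  assumes "1 < cvh * chv * bh / (mh ^ 2 * mv)"
  shows "\<not> E0_stable bh bv mh mv cvh chv tau"
proof
  assume "E0_stable bh bv mh mv cvh chv tau"
  obtain c s where adm: "admissible_growth s s c"
    using growth_parameters[OF assms] by blast
  then have "0 < s" "0 < c" by (simp_all add: admissible_growth_def)
  obtain \<delta> where "0 < \<delta>" and stable: "\<And>Sh Ih Sv Iv. solution Sh Ih Sv Iv \<Longrightarrow> history_in_Cplus tau Sh Ih Sv Iv \<Longrightarrow>
      \<forall>\<theta>\<in>{-tau..0}. deviation Sh Ih Sv Iv \<theta> < \<delta> \<Longrightarrow> \<forall>t\<ge>0. deviation Sh Ih Sv Iv t < s"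
    using \<open>E0_stable bh bv mh mv cvh chv tau\<close> \<open>0 < s\<close> unfolding E0_stable_def by meson
  define eta where "eta = min (\<delta> / 2) (bv/mv / 2)"
  have "0 < bv/mv" using bv_pos mv_pos by simp
  then have "0 < eta" "eta < \<delta>" "eta < bv/mv"
    using \<open>0 < \<delta>\<close> by (auto simp: eta_def min_less_iff_disj)
  \<comment> \<open>Existence matters: for a history without solutions the stability condition is vacuous.\<close>
  obtain Sh Ih Sv Iv where sol: "solution Sh Ih Sv Iv"
    and hist: "\<forall>\<theta>\<in>{-tau..0}. Sh \<theta> = bh/mh \<and> Ih \<theta> = eta \<and> Sv \<theta> = bv/mv - eta \<and> Iv \<theta> = eta"
    using solution_with_constant_history[OF \<open>0 < eta\<close> \<open>eta < bv/mv\<close>] by blast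
  have near: "\<forall>t\<ge>0. deviation Sh Ih Sv Iv t < s"
  proof (rule stable[OF sol])
    show "history_in_Cplus tau Sh Ih Sv Iv"
      using hist \<open>0 < eta\<close> \<open>eta < bv/mv\<close> bh_pos mh_pos by (auto simp: history_in_Cplus_def)
    show "\<forall>\<theta>\<in>{-tau..0}. deviation Sh Ih Sv Iv \<theta> < \<delta>"
      using hist \<open>0 < eta\<close> \<open>eta < \<delta>\<close> by (simp add: dev_def)
  qed
  define zeta where "zeta = eta / (2 * (1 + c))"
  have "0 < zeta" "zeta < eta" "c * zeta < eta"
    using \<open>0 < eta\<close> \<open>0 < c\<close> by (auto simp: zeta_def field_simps intro!: add_pos_pos mult_pos_pos)
  have growth: "\<forall>t\<ge>-tau. zeta * exp (s * t) < Ih t \<and> c * zeta * exp (s * t) < Iv t"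
  proof (rule infection_grows_near_E0[OF adm \<open>0 < zeta\<close> sol _ near], intro ballI)
    fix \<theta> assume "\<theta> \<in> {-tau..0}"
    then have "exp (s * \<theta>) \<le> 1" using \<open>0 < s\<close> by (simp add: mult_nonneg_nonpos)
    then have "zeta * exp (s * \<theta>) \<le> zeta" "c * zeta * exp (s * \<theta>) \<le> c * zeta"
      using \<open>0 < zeta\<close> \<open>0 < c\<close> by (simp_all add: mult_left_le)
    then show "zeta * exp (s * \<theta>) < Ih \<theta> \<and> c * zeta * exp (s * \<theta>) < Iv \<theta> \<and>
        bh/mh - s \<le> Sh \<theta> \<and> Sv \<theta> + Iv \<theta> \<le> bv/mv + 2 * s"
      using hist \<open>\<theta> \<in> {-tau..0}\<close> \<open>zeta < eta\<close> \<open>c * zeta < eta\<close> \<open>0 < s\<close> by auto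
  qed
  have "-tau \<le> 1 / zeta" using \<open>0 < zeta\<close> delay_nonneg by (simp add: order_trans[of _ 0])
  then have "zeta * exp (s * (1 / zeta)) < Ih (1 / zeta)" using growth by blast
  moreover have "s < zeta * exp (s * (1 / zeta))" using less_mult_exp_div[OF \<open>0 < zeta\<close>] \<open>0 < s\<close> by simp
  moreover have "\<bar>Ih (1 / zeta)\<bar> < s"
    using near \<open>0 < zeta\<close> unfolding dev_def max_less_iff_conj by auto
  ultimately show False by linarith
qed

end

theorem theorem2:
  fixes bh bv mh mv cvh chv tau :: real
  assumes "bh > 0" "bv > 0" "mh > 0" "mv > 0" "cvh > 0" "chv > 0" "tau \<ge> 0"
  defines "R0 \<equiv> sqrt (cvh * chv * bh / (mh ^ 2 * mv))"
  shows "(R0 < 1 \<longrightarrow> E0_LAS bh bv mh mv cvh chv tau) \<and>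
         (R0 > 1 \<longrightarrow> \<not> E0_stable bh bv mh mv cvh chv tau)"
proof -
  interpret vector_host_model bh bv mh mv cvh chv tau
    using assms by unfold_locales
  have "R0 < 1 \<longleftrightarrow> cvh * chv * bh / (mh ^ 2 * mv) < 1" "1 < R0 \<longleftrightarrow> 1 < cvh * chv * bh / (mh ^ 2 * mv)"
    unfolding R0_def by (simp_all add: real_sqrt_less_iff real_less_rsqrt)
  then show ?thesis
    using E0_stable_if_R0_lt_1 E0_attractive_if_R0_lt_1 E0_unstable_if_R0_gt_1
    by (simp add: E0_LAS_def)
qed

end
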